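(* Let $G$ consist of two parallel paths $P_1,P_2$ from $s$ to $d$ with $\mathrm{len}(P_1)<\mathrm{len}(P_2)$, and suppose $l_v=0$ for every vertex $v$ (so $l_{P_1}=l_{P_2}=0$). Suppose the dynamics is governed by the linear decision rule and that $p_{uv}(0)>0$ for every edge $(u,v)\in P_1$ (other initial pheromone levels and all initial flows at internal vertices are arbitrary nonnegative numbers). Let $f_s(0)>0$ and $b_d(0)>0$. (1) (Exponential increase.) If $f_s(t)=\lambda^t f_s(0)$ and $b_d(t)=\lambda^t b_d(0)$ for all $t\ge0$, for some $\lambda>1$, then there exist constants $C_1,C_2>0$ not depending on $\epsilon$ such that for all $\epsilon\in(0,1)$ and all integers $t\ge C_1+C_2\log(1/\epsilon)$, $\nu^f_{uv}(t)\ge 1-\epsilon$ and $\nu^b_{uv}(t)\ge1-\epsilon$ for every $(u,v)\in P_1$. (2) (Linear increase.) If $f_s(t)=f_s(0)+\alpha t$ and $b_d(t)=b_d(0)+\alpha t$ for all $t\ge0$, for some $\alpha>0$, then there exist a constant $K>0$ depending only on $\delta$ and $\mathrm{len}(P_2)$, and a constant $C>0$ not depending on $\epsilon$, such that for all $\epsilon\in(0,1)$ and all integers $t\ge C(1/\epsilon)^{K}$, $\nu^f_{uv}(t)\ge 1-\epsilon$ and $\nu^b_{uv}(t)\ge1-\epsilon$ for every $(u,v)\in P_1$. (The constants $C_1,C_2,C$ may depend on $\delta$, the input flow parameters, the path lengths and the initial configuration.)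
   Context: Model. $G=(V,E)$ is a finite directed graph with a source vertex $s$ and a destination vertex $d$. Time is discrete, $t=0,1,2,\dots$. The state at time $t$ consists of pheromone levels $p_{uv}(t)\ge 0$ for $(u,v)\in E$, forward flows $f_v(t)\ge 0$ and backward flows $b_v(t)\ge0$ for $v\in V$. Each vertex $v$ has a leakage parameter $l_v\in[0,1]$, and $\delta\in(0,1)$ is a fixed decay parameter. The values $f_s(t)$ and $b_d(t)$ are exogenous inputs (the flow newly appearing at $s$ and at $d$ at time $t$); all other flows are determined by the dynamics from the initial state. Linear decision rule: $f_{uv}(t)=f_u(t)\,p_{uv}(t)/\sum_{z:(u,z)\in E}p_{uz}(t)$ and $b_{uv}(t)=b_v(t)\,p_{uv}(t)/\sum_{z:(z,v)\in E}p_{zv}(t)$, with the convention that at a vertex with a single outgoing (resp. incoming) edge the entire forward (resp. backward) flow is sent along that edge. Updates: for $v\neq s$, $f_v(t+1)=(1-l_v)\sum_{z:(z,v)\in E}f_{zv}(t)$; for $u\ne d$, $b_u(t+1)=(1-l_u)\sum_{z:(u,z)\in E}b_{uz}(t)$; and $p_{uv}(t+1)=\delta\,(p_{uv}(t)+f_{uv}(t)+b_{uv}(t))$ for all $(u,v)\in E$. Normalized pheromone levels: $\nu^f_{uv}(t)=p_{uv}(t)/\sum_{z:(u,z)\in E}p_{uz}(t)$ and $\nu^b_{uv}(t)=p_{uv}(t)/\sum_{z:(z,v)\in E}p_{zv}(t)$. For a path $P$ from $s$ to $d$, its leakage is $l_P=1-\prod_{v\in P\setminus\{s,d\}}(1-l_v)$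 and its length $\mathrm{len}(P)$ is its number of edges. Two parallel paths: $G$ is the union of two directed paths $P_1,P_2$ from $s$ to $d$ that share no vertices other than $s$ and $d$. *)

theory Defs
  imports Complex_Main
begin

definition path_edges :: "'v list \<Rightarrow> ('v \<times> 'v) set" where
  "path_edges P = set (zip P (tl P))"

definition path_len :: "'v list \<Rightarrow> nat" where
  "path_len P = length P - 1"

definition two_parallel_paths ::
  "'v set \<Rightarrow> ('v \<times> 'v) set \<Rightarrow> 'v \<Rightarrow> 'v \<Rightarrow> 'v list \<Rightarrow> 'v list \<Rightarrow> bool" where
  "two_parallel_paths V E s d P1 P2 \<longleftrightarrow>
     length P1 \<ge> 2 \<and> length P2 \<ge> 2 \<and> distinct P1 \<and> distinct P2 \<and>
     hd P1 = s \<and> last P1 = d \<and> hd P2 = s \<and> last P2 = d \<and>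
     set P1 \<inter> set P2 = {s, d} \<and>
     V = set P1 \<union> set P2 \<and> E = path_edges P1 \<union> path_edges P2"

text \<open>Linear decision rule. States are indexed by time first:
  p t u v, f t v, b t v.  At a vertex with a single outgoing (incoming) edge the
  whole forward (backward) flow is sent along that edge.\<close>
definition fwd_flow ::
  "('v \<times> 'v) set \<Rightarrow> (nat \<Rightarrow> 'v \<Rightarrow> 'v \<Rightarrow> real) \<Rightarrow> (nat \<Rightarrow> 'v \<Rightarrow> real) \<Rightarrow> nat \<Rightarrow> 'v \<Rightarrow> 'v \<Rightarrow> real" where
  "fwd_flow E p f t u v =
     (if card {z. (u, z) \<in> E} = 1 then f t u
      else f t u * p t u v / (\<Sum>z\<in>{z. (u, z) \<in> E}. p t u z))"

definition bwd_flow ::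
  "('v \<times> 'v) set \<Rightarrow> (nat \<Rightarrow> 'v \<Rightarrow> 'v \<Rightarrow> real) \<Rightarrow> (nat \<Rightarrow> 'v \<Rightarrow> real) \<Rightarrow> nat \<Rightarrow> 'v \<Rightarrow> 'v \<Rightarrow> real" where
  "bwd_flow E p b t u v =
     (if card {z. (z, v) \<in> E} = 1 then b t v
      else b t v * p t u v / (\<Sum>z\<in>{z. (z, v) \<in> E}. p t z v))"

text \<open>The update rules of the dynamics (f t s and b t d are exogenous, hence unconstrained).\<close>
definition lin_dynamics ::
  "'v set \<Rightarrow> ('v \<times> 'v) set \<Rightarrow> 'v \<Rightarrow> 'v \<Rightarrow> ('v \<Rightarrow> real) \<Rightarrow> real \<Rightarrow>
   (nat \<Rightarrow> 'v \<Rightarrow> 'v \<Rightarrow> real) \<Rightarrow> (nat \<Rightarrow> 'v \<Rightarrow> real) \<Rightarrow> (nat \<Rightarrow> 'v \<Rightarrow> real) \<Rightarrow> bool" where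
  "lin_dynamics V E s d l \<delta> p f b \<longleftrightarrow>
     (\<forall>t. \<forall>v\<in>V. v \<noteq> s \<longrightarrow>
        f (Suc t) v = (1 - l v) * (\<Sum>z\<in>{z. (z, v) \<in> E}. fwd_flow E p f t z v)) \<and>
     (\<forall>t. \<forall>u\<in>V. u \<noteq> d \<longrightarrow>
        b (Suc t) u = (1 - l u) * (\<Sum>z\<in>{z. (u, z) \<in> E}. bwd_flow E p b t u z)) \<and>
     (\<forall>t. \<forall>(u, v)\<in>E.
        p (Suc t) u v = \<delta> * (p t u v + fwd_flow E p f t u v + bwd_flow E p b t u v))"

definition nu_f :: "('v \<times> 'v) set \<Rightarrow> (nat \<Rightarrow> 'v \<Rightarrow> 'v \<Rightarrow> real) \<Rightarrow> nat \<Rightarrow> 'v \<Rightarrow> 'v \<Rightarrow> real" where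
  "nu_f E p t u v = p t u v / (\<Sum>z\<in>{z. (u, z) \<in> E}. p t u z)"

definition nu_b :: "('v \<times> 'v) set \<Rightarrow> (nat \<Rightarrow> 'v \<Rightarrow> 'v \<Rightarrow> real) \<Rightarrow> nat \<Rightarrow> 'v \<Rightarrow> 'v \<Rightarrow> real" where
  "nu_b E p t u v = p t u v / (\<Sum>z\<in>{z. (z, v) \<in> E}. p t z v)"

definition pp_setup ::
  "'v set \<Rightarrow> ('v \<times> 'v) set \<Rightarrow> 'v \<Rightarrow> 'v \<Rightarrow> 'v list \<Rightarrow> 'v list \<Rightarrow> ('v \<Rightarrow> real) \<Rightarrow> real \<Rightarrow>
   (nat \<Rightarrow> 'v \<Rightarrow> 'v \<Rightarrow> real) \<Rightarrow> (nat \<Rightarrow> 'v \<Rightarrow> real) \<Rightarrow> (nat \<Rightarrow> 'v \<Rightarrow> real) \<Rightarrow> bool" where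
  "pp_setup V E s d P1 P2 l \<delta> p f b \<longleftrightarrow>
     two_parallel_paths V E s d P1 P2 \<and> path_len P1 < path_len P2 \<and>
     0 < \<delta> \<and> \<delta> < 1 \<and> (\<forall>v\<in>V. l v = 0) \<and>
     lin_dynamics V E s d l \<delta> p f b \<and>
     (\<forall>(u, v)\<in>E. p 0 u v \<ge> 0) \<and> (\<forall>(u, v)\<in>path_edges P1. p 0 u v > 0) \<and>
     (\<forall>v\<in>V. f 0 v \<ge> 0 \<and> b 0 v \<ge> 0) \<and> f 0 s > 0 \<and> b 0 d > 0"

end

theory Submission
  imports Defs
begin

(* Fresh input returns to the branching vertices faster along the short path. At s and d only
   the first and last edges of P1 and P2 compete; let z t be the larger of the two shares of
   pheromone held there by the long path. Input entering at time t comes back along P1 after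
   m steps but along P2 only after n > m steps, so with growing input the short edges receive
   more by a gap L t. If z stays below M during the last n steps, this gives
   z (t + 1) <= M / (1 + h t * (1 - M)) with h = L / U, U bounding pheromone plus input.
   For exponential input h is a positive constant and z decays geometrically, whence the
   logarithmic threshold. For linear input h t = kappa / (t + H) with kappa = (1 - delta) / 3
   and z decays like t powr (- kappa / (4 * n)) once it is below 1/2, whence the threshold
   C * (1 / eps) powr (12 * n / (1 - delta)). On P1 the normalized pheromone is 1 - z at
   s and d and 1 on every internal edge. *)

section \<open>Contraction of the long path's share\<close>

lemma mixing_ratio_le:
  fixes A v M a1 a2 J1 J2 :: real
  assumes A: "0 < A" and v: "0 \<le> v" "v \<le> M" and M: "0 \<le> M" "M \<le> 1"
    and a1: "J1 * (1 - M) \<le> a1" and a2: "0 \<le> a2" "a2 \<le> J2 * M" and J: "0 \<le> J2" "J2 \<le> J1"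
  shows "(v * A + a2) / (A + a1 + a2) \<le> M * (A + J2) / (A + J2 + (J1 - J2) * (1 - M))"
proof -
  have J1M: "0 \<le> J1 * (1 - M)" and J2M: "0 \<le> J2 * M" using J M by simp_all
  have MA: "M * A \<le> A" using M A by (simp add: mult_left_le_one_le)
  have "(v * A + a2) / (A + a1 + a2) \<le> (M * A + a2) / (A + J1 * (1 - M) + a2)"
    using v A a1 a2 J1M M by (intro frac_le) (auto intro: mult_right_mono add_nonneg_nonneg)
  also have "\<dots> \<le> (M * A + J2 * M) / (A + J1 * (1 - M) + J2 * M)"
  proof -
    have "(M * A + a2) * (A + J1 * (1 - M) + J2 * M) - (M * A + J2 * M) * (A + J1 * (1 - M) + a2)
          = (J2 * M - a2) * (M * A - (A + J1 * (1 - M)))"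
      by (simp add: algebra_simps)
    also have "\<dots> \<le> 0" using a2 MA J1M by (intro mult_nonneg_nonpos) auto
    finally show ?thesis using A J1M J2M a2 by (simp add: divide_simps)
  qed
  also have "\<dots> = M * (A + J2) / (A + J2 + (J1 - J2) * (1 - M))" by (simp add: algebra_simps)
  finally show ?thesis .
qed

text \<open>One update at a branching vertex: \<open>P\<close>, \<open>Q\<close> are the pheromones on the short and long edge,
  the input \<open>I\<close> is split in proportion to them, and \<open>a1\<close>, \<open>a2\<close> are the flows returning along the
  short and long path, coming from earlier inputs \<open>J1 \<ge> J2 + L\<close>.\<close>

lemma hub_share_update_le:
  fixes P Q I a1 a2 J1 J2 M U L \<delta> :: real
  assumes \<delta>: "0 < \<delta>"
    and P': "P' = \<delta> * (P + I * (1 - Q / (P + Q)) + a1)" and Q': "Q' = \<delta> * (Q + I * (Q / (P + Q)) + a2)"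
    and P: "0 < P" and Q: "0 \<le> Q" and I: "0 \<le> I"
    and share: "Q / (P + Q) \<le> M" and M: "0 \<le> M" "M \<le> 1"
    and a1: "J1 * (1 - M) \<le> a1" and a2: "0 \<le> a2" "a2 \<le> J2 * M" and J: "0 \<le> J2" "J2 \<le> J1"
    and U: "P + Q + I + J2 \<le> U" and L: "0 < L" "L \<le> J1 - J2"
  shows "Q' / (P' + Q') \<le> M / (1 + L / U * (1 - M))"
proof -
  define v where "v = Q / (P + Q)"
  define A where "A = P + Q + I"
  have A: "0 < A" using P Q I unfolding A_def by simp
  have "P' + Q' = \<delta> * (A + a1 + a2)" unfolding P' Q' A_def by (simp add: algebra_simps)
  moreover have "Q' = \<delta> * (v * A + a2)"
    using P Q unfolding Q' v_def A_def by (simp add: field_simps)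
  ultimately have "Q' / (P' + Q') = (v * A + a2) / (A + a1 + a2)" using \<delta> by simp
  also have "\<dots> \<le> M * (A + J2) / (A + J2 + (J1 - J2) * (1 - M))"
    using P Q share unfolding v_def by (intro mixing_ratio_le A M a1 a2 J) auto
  also have "\<dots> \<le> M * U / (U + L * (1 - M))"
  proof -
    have AU: "A + J2 \<le> U" using U unfolding A_def .
    have "(A + J2) * L * (1 - M) \<le> U * (J1 - J2) * (1 - M)"
      using AU L M A J by (intro mult_right_mono mult_mono) auto
    then have "M * ((A + J2) * (U + L * (1 - M))) \<le> M * (U * (A + J2 + (J1 - J2) * (1 - M)))"
      using M by (intro mult_left_mono) (auto simp: algebra_simps)
    moreover have "0 < A + J2 + (J1 - J2) * (1 - M)" "0 < U + L * (1 - M)"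
      using A J M L AU by (auto intro: add_pos_nonneg)
    ultimately show ?thesis by (simp add: divide_simps algebra_simps)
  qed
  also have "\<dots> = M / (1 + L / U * (1 - M))"
    using A J U unfolding A_def by (simp add: field_simps)
  finally show ?thesis .
qed

definition window_contraction :: "nat \<Rightarrow> (nat \<Rightarrow> real) \<Rightarrow> (nat \<Rightarrow> real) \<Rightarrow> bool" where
  "window_contraction n h z \<longleftrightarrow>
     (\<forall>t M. n \<le> Suc t \<longrightarrow> 0 \<le> M \<longrightarrow> M < 1 \<longrightarrow> (\<forall>j. Suc t - n \<le> j \<and> j \<le> t \<longrightarrow> z j \<le> M) \<longrightarrow>
        z (Suc t) \<le> M / (1 + h t * (1 - M)))"

lemma window_contractionD:
  assumes "window_contraction n h z" "n \<le> Suc t" "0 \<le> M" "M < 1"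
    "\<And>j. Suc t - n \<le> j \<Longrightarrow> j \<le> t \<Longrightarrow> z j \<le> M"
  shows "z (Suc t) \<le> M / (1 + h t * (1 - M))"
  using assms unfolding window_contraction_def by blast

lemma window_contraction_induct:
  fixes z G :: "nat \<Rightarrow> real"
  assumes contr: "window_contraction n h z" and n: "1 \<le> n"
    and G: "\<And>t. T \<le> t \<Longrightarrow> 0 \<le> G t \<and> G t < 1"
    and G_antimono: "\<And>t t'. T \<le> t \<Longrightarrow> t \<le> t' \<Longrightarrow> G t' \<le> G t"
    and init: "\<And>t. T \<le> t \<Longrightarrow> t < T + n \<Longrightarrow> z t \<le> G t"
    and G_step: "\<And>t. T + n \<le> Suc t \<Longrightarrow> G (Suc t - n) / (1 + h t * (1 - G (Suc t - n))) \<le> G (Suc t)"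
    and t: "T \<le> t"
  shows "z t \<le> G t"
  using t
proof (induction t rule: less_induct)
  case (less t)
  show ?case
  proof (cases "t < T + n")
    case True
    with less.prems init show ?thesis by blast
  next
    case False
    then obtain t' where t': "t = Suc t'" and tt: "T + n \<le> Suc t'" using n by (cases t) auto
    let ?M = "G (Suc t' - n)"
    have "z j \<le> ?M" if "Suc t' - n \<le> j" "j \<le> t'" for j
    proof -
      have "z j \<le> G j" using less.IH[of j] that t' tt by simp
      also have "\<dots> \<le> ?M" using G_antimono that tt by simp
      finally show ?thesis .
    qed
    then have "z t \<le> ?M / (1 + h t' * (1 - ?M))"
      unfolding t' using window_contractionD[OF contr] G[of "Suc t' - n"] tt by auto
    also have "\<dots> \<le> G t" using G_step tt t' by simp
    finally show ?thesis .
  qed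
qed

lemma max_on_window_lt_one:
  fixes z :: "nat \<Rightarrow> real"
  assumes "\<And>t. 0 \<le> z t \<and> z t < 1"
  shows "\<exists>M0. 0 \<le> M0 \<and> M0 < 1 \<and> (\<forall>t. T \<le> t \<longrightarrow> t < T + n \<longrightarrow> z t \<le> M0)"
proof -
  define M0 where "M0 = Max (insert 0 (z ` {T..<T + n}))"
  have "M0 \<in> insert 0 (z ` {T..<T + n})" unfolding M0_def by (intro Max_in) auto
  then have "0 \<le> M0 \<and> M0 < 1" using assms unfolding M0_def by auto
  moreover have "z t \<le> M0" if "T \<le> t" "t < T + n" for t
    unfolding M0_def using that by (intro Max_ge) auto
  ultimately show ?thesis by blast
qed

lemma window_contraction_geometric_decay:
  fixes z h :: "nat \<Rightarrow> real"
  assumes contr: "window_contraction n h z" and n: "1 \<le> n"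
    and h0: "0 < h0" "\<And>t. h0 \<le> h t" and range: "\<And>t. 0 \<le> z t \<and> z t < 1"
  shows "\<exists>r. 0 < r \<and> r < 1 \<and> (\<forall>t. z t \<le> r ^ (t - n))"
proof -
  obtain M0 where M0: "0 \<le> M0" "M0 < 1" and init: "\<And>t. t < n \<Longrightarrow> z t \<le> M0"
    using max_on_window_lt_one[of z 0 n, OF range] by auto
  define \<rho> where "\<rho> = 1 / (1 + h0 * (1 - M0))"
  define r where "r = root n \<rho>"
  have den: "1 < 1 + h0 * (1 - M0)" using h0 M0 by simp
  have \<rho>: "0 < \<rho>" "\<rho> < 1" using den unfolding \<rho>_def by auto
  have r: "0 < r" "r < 1" using \<rho> n unfolding r_def by (auto simp: real_root_gt_zero)
  have rn: "r ^ n = \<rho>" using \<rho> n unfolding r_def by simp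
  define G where "G t = M0 * r ^ (t - n)" for t
  have G: "0 \<le> G t \<and> G t \<le> M0" for t
    using M0 r unfolding G_def by (simp add: mult_left_le power_le_one)
  have "z t \<le> G t" for t
  proof (rule window_contraction_induct[OF contr n, of 0])
    show "0 \<le> G t \<and> G t < 1" for t using G M0 by (meson order_le_less_trans)
    show "G t' \<le> G t" if "t \<le> t'" for t t'
      using that r M0 unfolding G_def by (intro mult_left_mono power_decreasing) auto
    show "z t \<le> G t" if "t < 0 + n" for t using init that unfolding G_def by simp
    show "G (Suc t - n) / (1 + h t * (1 - G (Suc t - n))) \<le> G (Suc t)" if "0 + n \<le> Suc t" for t
    proof -
      let ?u = "Suc t - n"
      have "h0 * (1 - M0) \<le> h t * (1 - G ?u)" using h0(1) h0(2)[of t] G[of ?u] M0 by (intro mult_mono) auto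
      then have "G ?u / (1 + h t * (1 - G ?u)) \<le> G ?u * \<rho>"
        using den G[of ?u] unfolding \<rho>_def by (simp add: divide_left_mono)
      also have "\<dots> = M0 * r ^ (?u - n + n)" unfolding G_def rn[symmetric] by (simp add: power_add)
      also have "\<dots> \<le> G (Suc t)"
        unfolding G_def using r M0 by (intro mult_left_mono power_decreasing) auto
      finally show ?thesis .
    qed
  qed simp
  then have "z t \<le> r ^ (t - n)" for t
    using G[of t] M0 r unfolding G_def by (meson mult_left_le_one_le order_trans zero_le_power less_imp_le)
  with r show ?thesis by blast
qed

lemma geometric_decay_threshold:
  fixes z :: "nat \<Rightarrow> real"
  assumes r: "0 < r" "r < 1" and decay: "\<And>t. z t \<le> r ^ (t - T)"
  shows "\<exists>C1>0. \<exists>C2>0. \<forall>\<epsilon>. 0 < \<epsilon> \<and> \<epsilon> < 1 \<longrightarrow> (\<forall>t. C1 + C2 * ln (1 / \<epsilon>) \<le> real t \<longrightarrow> z t \<le> \<epsilon>)"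
proof (intro exI conjI allI impI)
  have lr: "ln r < 0" using r by simp
  show "0 < real T + 1" "0 < - 1 / ln r" using lr by auto
  fix \<epsilon> :: real and t :: nat
  assume \<epsilon>: "0 < \<epsilon> \<and> \<epsilon> < 1" and t: "real T + 1 + - 1 / ln r * ln (1 / \<epsilon>) \<le> real t"
  have "0 \<le> - 1 / ln r * ln (1 / \<epsilon>)"
    using lr \<epsilon> by (intro mult_nonneg_nonneg divide_nonpos_neg) auto
  then have "T \<le> t" "- 1 / ln r * ln (1 / \<epsilon>) \<le> real (t - T)" using t by (auto simp: of_nat_diff)
  then have "ln \<epsilon> \<ge> real (t - T) * ln r"
    using lr \<epsilon> by (simp add: ln_div field_simps)
  then have "r ^ (t - T) \<le> \<epsilon>" using r \<epsilon> by (simp add: ln_realpow[symmetric])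
  then show "z t \<le> \<epsilon>" using decay[of t] by linarith
qed

lemma inverse_one_plus_le_ratio_powr:
  fixes X k :: real and n :: nat
  assumes n: "1 \<le> n" and k: "0 < k" "k \<le> 1" and X: "2 * real n + 1 \<le> X"
  shows "1 / (1 + k / (X - 1)) \<le> ((X - n) / X) powr (k / (2 * real n))"
proof -
  define c where "c = k / (2 * real n)"
  define w where "w = k / (X - 1)"
  have Xn: "0 < X - n" and X1: "0 < X - 1" using X n by auto
  have w: "0 < w" using k X1 unfolding w_def by simp
  have "ln (1 / (1 + w)) \<le> 1 / (1 + w) - 1" using w by (intro ln_le_minus_one) auto
  then have ln_w: "w / (1 + w) \<le> ln (1 + w)" using w by (simp add: ln_div field_simps)
  have "ln (X / (X - n)) \<le> X / (X - n) - 1" using Xn by (intro ln_le_minus_one) auto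
  also have "\<dots> = n / (X - n)" using Xn by (simp add: field_simps)
  finally have ln_X: "- (n / (X - n)) \<le> ln ((X - n) / X)" using Xn by (simp add: ln_div)
  have "c * (n / (X - n)) = k / (2 * (X - n))" using n Xn unfolding c_def by (simp add: field_simps)
  also have "\<dots> \<le> k / (X - 1 + k)" using X k X1 by (intro divide_left_mono) auto
  also have "\<dots> = w / (1 + w)"
  proof -
    have "1 + w = (X - 1 + k) / (X - 1)" unfolding w_def using X1 by (simp add: field_simps)
    then show ?thesis unfolding w_def using X1 k by simp
  qed
  finally have key: "c * (n / (X - n)) \<le> w / (1 + w)" .
  have "1 / (1 + w) = exp (- ln (1 + w))" using w by (simp add: exp_minus inverse_eq_divide)
  also have "\<dots> \<le> exp (c * (- (n / (X - n))))" using key ln_w by simp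
  also have "\<dots> \<le> exp (c * ln ((X - n) / X))"
    using ln_X k unfolding c_def by (intro exp_mono mult_left_mono) auto
  also have "\<dots> = ((X - n) / X) powr c" using Xn by (simp add: powr_def)
  finally show ?thesis unfolding w_def c_def .
qed

lemma min_one_powr_mult_le:
  fixes a X Y c :: real
  assumes a: "0 < a" and Y: "0 < Y" "Y \<le> X" and c: "0 \<le> c"
  shows "min 1 ((a / Y) powr c) * (Y / X) powr c \<le> min 1 ((a / X) powr c)"
proof (rule min.boundedI)
  have q: "0 \<le> (Y / X) powr c" "(Y / X) powr c \<le> 1" using Y c by (auto intro: powr_le1)
  then show "min 1 ((a / Y) powr c) * (Y / X) powr c \<le> 1" by (simp add: mult_le_one)
  have "min 1 ((a / Y) powr c) * (Y / X) powr c \<le> (a / Y) powr c * (Y / X) powr c"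
    using q by (intro mult_right_mono) auto
  also have "\<dots> = (a / X) powr c" using a Y by (simp add: powr_mult[symmetric])
  finally show "min 1 ((a / Y) powr c) * (Y / X) powr c \<le> (a / X) powr c" .
qed

lemma power_profile_step:
  fixes h :: "nat \<Rightarrow> real" and \<kappa> H M0 a :: real
  assumes n: "1 \<le> n" and \<kappa>: "0 < \<kappa>" "\<kappa> \<le> 1" and H: "2 * real n \<le> H" and h: "\<kappa> / (real t + H) \<le> h t"
    and M0: "0 \<le> M0" "M0 < 1" and a: "0 < a" and t: "n \<le> Suc t"
  defines "G \<equiv> \<lambda>u::nat. M0 * min 1 ((a / (real u + H)) powr (\<kappa> * (1 - M0) / (2 * real n)))"
  shows "G (Suc t - n) / (1 + h t * (1 - G (Suc t - n))) \<le> G (Suc t)"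
proof -
  define k where "k = \<kappa> * (1 - M0)"
  define c where "c = k / (2 * real n)"
  define X where "X = real t + 1 + H"
  let ?u = "Suc t - n"
  have k: "0 < k" "k \<le> 1" unfolding k_def using \<kappa> M0 by (auto simp: mult_le_one)
  have tH: "0 < real t + H" using H n by simp
  have G: "0 \<le> G ?u" "G ?u \<le> M0" unfolding G_def using M0 by (auto simp: mult_left_le)
  have uX: "real ?u + H = X - n" unfolding X_def using t by (simp add: of_nat_diff)
  have X: "2 * real n + 1 \<le> X" "0 < X - n" unfolding X_def using H n by auto
  have "k / (real t + H) = \<kappa> / (real t + H) * (1 - M0)" unfolding k_def by simp
  also have "\<dots> \<le> h t * (1 - G ?u)"
  proof (rule mult_mono)
    show "0 \<le> h t" using h \<kappa> tH by (meson divide_nonneg_pos less_imp_le order_trans)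
  qed (use h G M0 in auto)
  finally have "k / (real t + H) \<le> h t * (1 - G ?u)" .
  moreover have "0 < 1 + k / (real t + H)" using k tH by (simp add: add_pos_nonneg)
  ultimately have "G ?u / (1 + h t * (1 - G ?u)) \<le> G ?u / (1 + k / (real t + H))"
    using G by (intro divide_left_mono mult_pos_pos) auto
  also have "\<dots> = G ?u * (1 / (1 + k / (X - 1)))" unfolding X_def by simp
  also have "\<dots> \<le> G ?u * ((X - n) / X) powr c"
    using inverse_one_plus_le_ratio_powr[OF n k X(1)] G unfolding c_def by (intro mult_left_mono) auto
  also have "\<dots> = M0 * (min 1 ((a / (X - n)) powr c) * ((X - n) / X) powr c)"
    unfolding G_def uX c_def k_def by simp
  also have "\<dots> \<le> M0 * min 1 ((a / X) powr c)"
    using min_one_powr_mult_le[of a "X - n" X c] a X k M0 unfolding c_def by (intro mult_left_mono) auto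
  also have "\<dots> = G (Suc t)" unfolding G_def X_def c_def k_def by (simp add: algebra_simps)
  finally show ?thesis .
qed

lemma window_contraction_power_decay:
  fixes z h :: "nat \<Rightarrow> real" and \<kappa> H M0 :: real
  assumes contr: "window_contraction n h z" and n: "1 \<le> n"
    and \<kappa>: "0 < \<kappa>" "\<kappa> \<le> 1" and H: "2 * real n \<le> H" and h: "\<And>t. \<kappa> / (real t + H) \<le> h t"
    and M0: "0 \<le> M0" "M0 < 1" and init: "\<And>t. T \<le> t \<Longrightarrow> t < T + n \<Longrightarrow> z t \<le> M0"
    and t: "T \<le> t"
  shows "z t \<le> M0 * min 1 (((real T + n + H) / (real t + H)) powr (\<kappa> * (1 - M0) / (2 * real n)))"
proof -
  define c where "c = \<kappa> * (1 - M0) / (2 * real n)"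
  define a where "a = real T + n + H"
  have c: "0 \<le> c" unfolding c_def using \<kappa> M0 by simp
  have a: "0 < a" unfolding a_def using H n by simp
  have tH: "0 < real t + H" for t using H n by simp
  define G where "G t = M0 * min 1 ((a / (t + H)) powr c)" for t :: nat
  have G: "0 \<le> G t \<and> G t \<le> M0" for t unfolding G_def using M0 by (auto simp: mult_left_le)
  have "z t \<le> G t"
  proof (rule window_contraction_induct[OF contr n _ _ _ _ t])
    show "0 \<le> G t \<and> G t < 1" for t using G M0 by (meson order_le_less_trans)
    show "G t' \<le> G t" if "t \<le> t'" for t t'
    proof -
      have "a / (t' + H) \<le> a / (t + H)" using a tH that by (intro divide_left_mono) auto
      then show ?thesis unfolding G_def using M0 a c tH[of t'] by (intro mult_left_mono min.mono powr_mono2) auto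
    qed
    show "z t \<le> G t" if "T \<le> t" "t < T + n" for t
    proof -
      have "1 \<le> a / (t + H)" unfolding a_def using that tH by simp
      then have "G t = M0" unfolding G_def using c by (simp add: ge_one_powr_ge_zero)
      then show ?thesis using init that by simp
    qed
    show "G (Suc t - n) / (1 + h t * (1 - G (Suc t - n))) \<le> G (Suc t)" if "T + n \<le> Suc t" for t
      using power_profile_step[where h = h and t = t, OF n \<kappa> H h[of t] M0 a] that unfolding G_def c_def by simp
  qed
  then show ?thesis unfolding G_def a_def c_def .
qed

text \<open>Once the sequence is below 1/2 the decay exponent no longer depends on the initial
  configuration.\<close>

lemma window_contraction_uniform_power_decay:
  fixes z h :: "nat \<Rightarrow> real" and \<kappa> H :: real
  assumes contr: "window_contraction n h z" and n: "1 \<le> n"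
    and \<kappa>: "0 < \<kappa>" "\<kappa> \<le> 1" and H: "2 * real n \<le> H" and h: "\<And>t. \<kappa> / (real t + H) \<le> h t"
    and range: "\<And>t. 0 \<le> z t \<and> z t < 1"
  shows "\<exists>a>0. \<exists>T. \<forall>t\<ge>T. z t \<le> (a / (t + H)) powr (\<kappa> / (4 * real n))"
proof -
  note decay = window_contraction_power_decay[OF contr n \<kappa> H h]
  obtain M0 where M0: "0 \<le> M0" "M0 < 1" and init: "\<And>t. t < n \<Longrightarrow> z t \<le> M0"
    using max_on_window_lt_one[of z 0 n, OF range] by auto
  define c where "c = \<kappa> * (1 - M0) / (2 * real n)"
  define a where "a = real n + H"
  have c: "0 < c" unfolding c_def using \<kappa> M0 n by simp
  have a: "0 < a" unfolding a_def using H n by simp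
  have tH: "0 < real t + H" for t using H n by simp
  define T where "T = nat \<lceil>a * 2 powr (1 / c)\<rceil>"
  have half: "z t \<le> 1 / 2" if "T \<le> t" for t
  proof -
    have "a * 2 powr (1 / c) \<le> real t + H" using that H unfolding T_def by linarith
    then have "a / (t + H) \<le> 1 / 2 powr (1 / c)" using tH a by (simp add: field_simps)
    then have "(a / (t + H)) powr c \<le> (1 / 2 powr (1 / c)) powr c" using c a tH[of t] by (intro powr_mono2) auto
    also have "\<dots> = 1 / 2" using c by (simp add: powr_divide powr_powr)
    finally have "M0 * min 1 ((a / (t + H)) powr c) \<le> 1 * (1 / 2)" using M0 by (intro mult_mono) auto
    moreover have "z t \<le> M0 * min 1 ((a / (t + H)) powr c)"
      using decay[OF M0, of 0 t] init unfolding a_def c_def by simp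
    ultimately show ?thesis by simp
  qed
  define a' where "a' = real T + n + H"
  have "z t \<le> (a' / (t + H)) powr (\<kappa> / (4 * real n))" if "T \<le> t" for t
  proof -
    have "\<kappa> * (1 - 1 / 2) / (2 * real n) = \<kappa> / (4 * real n)" by simp
    then have "z t \<le> 1 / 2 * min 1 ((a' / (t + H)) powr (\<kappa> / (4 * real n)))"
      using decay[of "1 / 2" T t] half that unfolding a'_def by simp
    moreover have "0 \<le> (a' / (t + H)) powr (\<kappa> / (4 * real n))" by simp
    ultimately show ?thesis
      using min.cobounded2[of 1 "(a' / (t + H)) powr (\<kappa> / (4 * real n))"] by linarith
  qed
  moreover have "0 < a'" unfolding a'_def using H n by simp
  ultimately show ?thesis by blast
qed

lemma power_decay_threshold:
  fixes z :: "nat \<Rightarrow> real"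
  assumes a: "0 < a" and c: "0 < c" and H: "0 \<le> H"
    and decay: "\<And>t. T \<le> t \<Longrightarrow> z t \<le> (a / (t + H)) powr c"
  shows "\<exists>C>0. \<forall>\<epsilon>. 0 < \<epsilon> \<and> \<epsilon> < 1 \<longrightarrow> (\<forall>t. C * (1 / \<epsilon>) powr (1 / c) \<le> real t \<longrightarrow> z t \<le> \<epsilon>)"
proof (intro exI conjI allI impI)
  show "0 < a + real T" using a by simp
  fix \<epsilon> :: real and t :: nat
  assume \<epsilon>: "0 < \<epsilon> \<and> \<epsilon> < 1" and t: "(a + real T) * (1 / \<epsilon>) powr (1 / c) \<le> real t"
  have "1 \<le> (1 / \<epsilon>) powr (1 / c)" using \<epsilon> c by (intro ge_one_powr_ge_zero) auto
  then have "(a + real T) * 1 \<le> (a + real T) * (1 / \<epsilon>) powr (1 / c)"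
    using a by (intro mult_left_mono) auto
  then have aT: "a + real T \<le> real t" using t by (metis mult.right_neutral order_trans)
  have \<epsilon>c: "0 < \<epsilon> powr (1 / c)" "(1 / \<epsilon>) powr (1 / c) = 1 / \<epsilon> powr (1 / c)"
    using \<epsilon> by (auto simp: powr_divide)
  have "a / (t + H) \<le> a / t" using a aT H by (intro divide_left_mono) auto
  also have "\<dots> \<le> \<epsilon> powr (1 / c)"
  proof -
    have "a * (1 / \<epsilon> powr (1 / c)) \<le> (a + real T) * (1 / \<epsilon> powr (1 / c))"
      using \<epsilon>c by (intro mult_right_mono) auto
    then have "a * (1 / \<epsilon> powr (1 / c)) \<le> real t" using t unfolding \<epsilon>c(2) by linarith
    then show ?thesis using \<epsilon>c aT a by (simp add: divide_le_eq mult.commute)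
  qed
  finally have "(a / (t + H)) powr c \<le> (\<epsilon> powr (1 / c)) powr c"
    using a aT H c by (intro powr_mono2) auto
  also have "\<dots> = \<epsilon>" using c \<epsilon> by (simp add: powr_powr)
  moreover have "T \<le> t" using aT a by linarith
  ultimately show "z t \<le> \<epsilon>" using decay[of t] by simp
qed

section \<open>Growth of the total pheromone\<close>

lemma affine_recurrence_bound:
  fixes S :: "nat \<Rightarrow> real"
  assumes \<delta>: "0 < \<delta>" "\<delta> < 1" and a: "0 \<le> a" and c: "0 \<le> c"
    and rec: "\<And>t. T \<le> t \<Longrightarrow> S (Suc t) \<le> \<delta> * (S t + a * t + c)"
  shows "\<exists>K. \<forall>t\<ge>T. S t \<le> a * \<delta> / (1 - \<delta>) * t + K"
proof -
  define \<sigma> where "\<sigma> = a * \<delta> / (1 - \<delta>)"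
  define K where "K = max \<bar>S T\<bar> (\<delta> * c / (1 - \<delta>))"
  have \<sigma>: "\<delta> * (\<sigma> + a) = \<sigma>" "0 \<le> \<sigma>" unfolding \<sigma>_def using a \<delta> by (auto simp: field_simps)
  have "\<delta> * c / (1 - \<delta>) \<le> K" "S T \<le> K" unfolding K_def by auto
  then have K: "\<delta> * c \<le> (1 - \<delta>) * K" "S T \<le> K"
    using \<delta> by (auto simp: divide_le_eq mult.commute)
  have "S t \<le> \<sigma> * t + K" if "T \<le> t" for t
    using that
  proof (induction t rule: dec_induct)
    case base
    have "0 \<le> \<sigma> * T" using \<sigma> by simp
    then show ?case using K by linarith
  next
    case (step t)
    have "\<delta> * (S t + a * t + c) \<le> \<delta> * (\<sigma> * t + K + a * t + c)"
      using step.IH \<delta> by (intro mult_left_mono) auto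
    then have "S (Suc t) \<le> \<delta> * (\<sigma> * t + K + a * t + c)" using rec[OF step.hyps(1)] by linarith
    also have "\<dots> = \<delta> * (\<sigma> + a) * t + \<delta> * K + \<delta> * c" by (simp add: algebra_simps)
    also have "\<dots> = \<sigma> * t + \<delta> * K + \<delta> * c" using \<sigma> by simp
    also have "\<dots> \<le> \<sigma> * Suc t + K" using K \<sigma> by (simp add: algebra_simps)
    finally show ?case .
  qed
  then show ?thesis unfolding \<sigma>_def by blast
qed

lemma geometric_recurrence_bound:
  fixes S :: "nat \<Rightarrow> real"
  assumes \<delta>: "0 < \<delta>" "\<delta> < 1" and lam: "1 < lam" and c: "0 \<le> c"
    and rec: "\<And>t. T \<le> t \<Longrightarrow> S (Suc t) \<le> \<delta> * (S t + c * lam ^ t)"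
  shows "\<exists>K>0. \<forall>t\<ge>T. S t \<le> K * lam ^ t"
proof -
  define K where "K = max 1 (max (S T / lam ^ T) (\<delta> * c / (lam - \<delta>)))"
  have "0 < K" "\<delta> * c / (lam - \<delta>) \<le> K" "S T / lam ^ T \<le> K" unfolding K_def by auto
  then have K: "0 < K" "\<delta> * c \<le> (lam - \<delta>) * K" "S T \<le> K * lam ^ T"
    using \<delta> lam by (auto simp: divide_le_eq mult.commute)
  have "S t \<le> K * lam ^ t" if "T \<le> t" for t
    using that
  proof (induction t rule: dec_induct)
    case base
    show ?case using K by simp
  next
    case (step t)
    have "\<delta> * (S t + c * lam ^ t) \<le> \<delta> * (K * lam ^ t + c * lam ^ t)"
      using step.IH \<delta> by (intro mult_left_mono) auto
    then have "S (Suc t) \<le> \<delta> * (K * lam ^ t + c * lam ^ t)" using rec[OF step.hyps(1)] by linarith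
    also have "\<dots> = (\<delta> * K + \<delta> * c) * lam ^ t" by (simp add: algebra_simps)
    also have "\<dots> \<le> (lam * K) * lam ^ t" using K lam by (intro mult_right_mono) (auto simp: algebra_simps)
    finally show ?case by (simp add: ac_simps)
  qed
  with K show ?thesis by blast
qed

lemma geometric_gap:
  fixes lam :: real
  assumes lam: "1 < lam" and mn: "1 \<le> m" "m < n" and t: "n - 1 \<le> t"
  shows "(lam - 1) / lam ^ (n - 1) * lam ^ t \<le> lam ^ (Suc t - m) - lam ^ (Suc t - n)"
proof -
  have "lam ^ t = lam ^ (Suc t - n) * lam ^ (n - 1)" using t mn by (simp flip: power_add)
  moreover have "0 < lam ^ (n - 1)" using lam by simp
  ultimately have "(lam - 1) / lam ^ (n - 1) * lam ^ t = (lam - 1) * lam ^ (Suc t - n)" using lam by simp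
  also have "\<dots> = lam ^ Suc (Suc t - n) - lam ^ (Suc t - n)" by (simp add: algebra_simps)
  also have "\<dots> \<le> lam ^ (Suc t - m) - lam ^ (Suc t - n)"
    using lam mn t by (intro diff_right_mono power_increasing) auto
  finally show ?thesis .
qed

section \<open>Two parallel paths\<close>

lemma mem_path_edges_iff:
  "(u, v) \<in> path_edges P \<longleftrightarrow> (\<exists>i. Suc i < length P \<and> u = P ! i \<and> v = P ! Suc i)"
proof
  assume "(u, v) \<in> path_edges P"
  then obtain i where "i < min (length P) (length (tl P))" "u = P ! i" "v = tl P ! i"
    unfolding path_edges_def set_zip by auto
  moreover have "Suc i < length P" "v = P ! Suc i" using calculation by (auto simp: nth_tl)
  ultimately show "\<exists>i. Suc i < length P \<and> u = P ! i \<and> v = P ! Suc i" by blast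
next
  assume "\<exists>i. Suc i < length P \<and> u = P ! i \<and> v = P ! Suc i"
  then obtain i where i: "Suc i < length P" "u = P ! i" "v = P ! Suc i" by blast
  then have "i < min (length P) (length (tl P))" "tl P ! i = P ! Suc i" by (auto simp: nth_tl)
  then show "(u, v) \<in> path_edges P" unfolding path_edges_def set_zip using i by force
qed

lemma two_parallel_paths_swap:
  "two_parallel_paths V E s d P Q \<Longrightarrow> two_parallel_paths V E s d Q P"
  unfolding two_parallel_paths_def by (auto simp: Un_commute Int_commute)

lemma two_parallel_paths_basic:
  assumes "two_parallel_paths V E s d P Q"
  shows "2 \<le> length P" "distinct P" "P ! 0 = s" "P ! (length P - 1) = d"
    "set P \<inter> set Q = {s, d}" "set P \<subseteq> V" "E = path_edges P \<union> path_edges Q"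
proof -
  have "P \<noteq> []" using assms unfolding two_parallel_paths_def by auto
  then show "P ! 0 = s" "P ! (length P - 1) = d"
    using assms unfolding two_parallel_paths_def by (auto simp: hd_conv_nth last_conv_nth)
qed (use assms in \<open>auto simp: two_parallel_paths_def\<close>)

lemma two_parallel_paths_nth:
  assumes tp: "two_parallel_paths V E s d P Q" and i: "i < length P"
  shows "P ! i = s \<longleftrightarrow> i = 0" "P ! i = d \<longleftrightarrow> i = length P - 1" "P ! i \<in> V"
proof -
  note basic = two_parallel_paths_basic[OF tp]
  have "0 < length P" "length P - 1 < length P" using i by auto
  then have "P ! i = P ! 0 \<longleftrightarrow> i = 0" "P ! i = P ! (length P - 1) \<longleftrightarrow> i = length P - 1"
    using nth_eq_iff_index_eq[OF basic(2) i] by blast+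
  then show "P ! i = s \<longleftrightarrow> i = 0" "P ! i = d \<longleftrightarrow> i = length P - 1"
    using basic(3,4) by simp_all
  show "P ! i \<in> V" using basic(6) i by (meson nth_mem subsetD)
qed

lemma two_parallel_paths_edge:
  assumes "two_parallel_paths V E s d P Q" "Suc i < length P"
  shows "(P ! i, P ! Suc i) \<in> E"
proof -
  have "(P ! i, P ! Suc i) \<in> path_edges P" unfolding mem_path_edges_iff using assms(2) by blast
  then show ?thesis by (simp add: two_parallel_paths_basic(7)[OF assms(1)])
qed

lemma two_parallel_paths_internal_edge:
  assumes tp: "two_parallel_paths V E s d P Q" and i: "0 < i" "i < length P - 1"
    and e: "(u, v) \<in> E" "u = P ! i \<or> v = P ! i"
  shows "(u, v) \<in> path_edges P"
proof -
  have "P ! i \<noteq> s" "P ! i \<noteq> d" using two_parallel_paths_nth(1,2)[OF tp, of i] i by simp_all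
  moreover have "P ! i \<in> set P" using i by simp
  ultimately have "P ! i \<notin> set Q" using two_parallel_paths_basic(5)[OF tp] by blast
  then have "(u, v) \<notin> path_edges Q"
    using e(2) by (auto simp: mem_path_edges_iff) (metis Suc_lessD nth_mem, metis nth_mem)
  then show ?thesis using e(1) two_parallel_paths_basic(7)[OF tp] by blast
qed

lemma two_parallel_paths_successors_internal:
  assumes tp: "two_parallel_paths V E s d P Q" and i: "0 < i" "i < length P - 1"
  shows "{z. (P ! i, z) \<in> E} = {P ! Suc i}"
proof -
  have "z = P ! Suc i" if e: "(P ! i, z) \<in> E" for z
  proof -
    obtain j where "Suc j < length P" "P ! i = P ! j" "z = P ! Suc j"
      using two_parallel_paths_internal_edge[OF tp i e] by (auto simp: mem_path_edges_iff)
    with two_parallel_paths_basic(2)[OF tp] i show ?thesis by (simp add: nth_eq_iff_index_eq)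
  qed
  then show ?thesis using two_parallel_paths_edge[OF tp, of i] i by auto
qed

lemma two_parallel_paths_predecessors_internal:
  assumes tp: "two_parallel_paths V E s d P Q" and i: "0 < i" "i < length P - 1"
  shows "{z. (z, P ! i) \<in> E} = {P ! (i - 1)}"
proof -
  have "z = P ! (i - 1)" if e: "(z, P ! i) \<in> E" for z
  proof -
    obtain j where "Suc j < length P" "z = P ! j" "P ! i = P ! Suc j"
      using two_parallel_paths_internal_edge[OF tp i e] by (auto simp: mem_path_edges_iff)
    with two_parallel_paths_basic(2)[OF tp] i show ?thesis by (simp add: nth_eq_iff_index_eq)
  qed
  then show ?thesis using two_parallel_paths_edge[OF tp, of "i - 1"] i by auto
qed

lemma two_parallel_paths_first_edge:
  assumes "two_parallel_paths V E s d P Q"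
  shows "(s, P ! 1) \<in> E"
  using two_parallel_paths_edge[OF assms, of 0] two_parallel_paths_basic(1,3)[OF assms] by simp

lemma two_parallel_paths_last_edge:
  assumes "two_parallel_paths V E s d P Q"
  shows "(P ! (length P - 2), d) \<in> E"
  using two_parallel_paths_edge[OF assms, of "length P - 2"] two_parallel_paths_basic(1,4)[OF assms]
  by (simp add: numeral_2_eq_2 Suc_diff_Suc)

lemma two_parallel_paths_successors_source:
  assumes tp: "two_parallel_paths V E s d P Q"
  shows "{z. (s, z) \<in> E} = {P ! 1, Q ! 1}"
proof -
  have from_s: "z = R ! 1" if tpR: "two_parallel_paths V E s d R R'" and e: "(s, z) \<in> path_edges R"
    for R R' z
  proof -
    obtain j where j: "Suc j < length R" "s = R ! j" "z = R ! Suc j"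
      using e by (auto simp: mem_path_edges_iff)
    then have "j = 0" using two_parallel_paths_nth(1)[OF tpR, of j] by simp
    with j show ?thesis by simp
  qed
  note tp' = two_parallel_paths_swap[OF tp]
  show ?thesis
  proof (intro equalityI subsetI)
    fix z assume "z \<in> {z. (s, z) \<in> E}"
    then show "z \<in> {P ! 1, Q ! 1}"
      using from_s[OF tp] from_s[OF tp'] two_parallel_paths_basic(7)[OF tp] by blast
  qed (use two_parallel_paths_first_edge[OF tp] two_parallel_paths_first_edge[OF tp'] in auto)
qed

lemma two_parallel_paths_predecessors_target:
  assumes tp: "two_parallel_paths V E s d P Q"
  shows "{z. (z, d) \<in> E} = {P ! (length P - 2), Q ! (length Q - 2)}"
proof -
  have to_d: "z = R ! (length R - 2)" if tpR: "two_parallel_paths V E s d R R'"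
    and e: "(z, d) \<in> path_edges R" for R R' z
  proof -
    obtain j where j: "Suc j < length R" "z = R ! j" "d = R ! Suc j"
      using e by (auto simp: mem_path_edges_iff)
    then have "Suc j = length R - 1" using two_parallel_paths_nth(2)[OF tpR, of "Suc j"] by simp
    then have "j = length R - 2" by linarith
    with j show ?thesis by simp
  qed
  note tp' = two_parallel_paths_swap[OF tp]
  show ?thesis
  proof (intro equalityI subsetI)
    fix z assume "z \<in> {z. (z, d) \<in> E}"
    then show "z \<in> {P ! (length P - 2), Q ! (length Q - 2)}"
      using to_d[OF tp] to_d[OF tp'] two_parallel_paths_basic(7)[OF tp] by blast
  qed (use two_parallel_paths_last_edge[OF tp] two_parallel_paths_last_edge[OF tp'] in auto)
qed

lemma two_parallel_paths_second_vertices_distinct: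
  assumes tp: "two_parallel_paths V E s d P Q" and Q: "3 \<le> length Q"
  shows "P ! 1 \<noteq> Q ! 1"
proof
  assume eq: "P ! 1 = Q ! 1"
  have P: "2 \<le> length P" using two_parallel_paths_basic(1)[OF tp] .
  then have "P ! 1 \<in> set P \<inter> set Q" using eq Q nth_mem[of 1 P] nth_mem[of 1 Q] by simp
  then have "P ! 1 = s \<or> P ! 1 = d" using two_parallel_paths_basic(5)[OF tp] by blast
  moreover have "P ! 1 \<noteq> s" using two_parallel_paths_nth(1)[OF tp, of 1] P by simp
  moreover have "Q ! 1 \<noteq> d" using two_parallel_paths_nth(2)[OF two_parallel_paths_swap[OF tp], of 1] Q by simp
  ultimately show False using eq by simp
qed

lemma two_parallel_paths_penultimate_vertices_distinct:
  assumes tp: "two_parallel_paths V E s d P Q" and Q: "3 \<le> length Q"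
  shows "P ! (length P - 2) \<noteq> Q ! (length Q - 2)"
proof
  assume eq: "P ! (length P - 2) = Q ! (length Q - 2)"
  have P: "2 \<le> length P" using two_parallel_paths_basic(1)[OF tp] .
  then have "P ! (length P - 2) \<in> set P \<inter> set Q"
    using eq Q nth_mem[of "length P - 2" P] nth_mem[of "length Q - 2" Q] by simp
  then have "P ! (length P - 2) = s \<or> P ! (length P - 2) = d"
    using two_parallel_paths_basic(5)[OF tp] by blast
  moreover have "P ! (length P - 2) \<noteq> d" using two_parallel_paths_nth(2)[OF tp, of "length P - 2"] P by simp
  moreover have "Q ! (length Q - 2) \<noteq> s"
    using two_parallel_paths_nth(1)[OF two_parallel_paths_swap[OF tp], of "length Q - 2"] Q by simp
  ultimately show False using eq by simp
qed

section \<open>The linear dynamics on two parallel paths\<close>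

lemma fwd_flow_nonneg:
  assumes "\<And>u' v'. (u', v') \<in> E \<Longrightarrow> 0 \<le> p t u' v'" "0 \<le> f t u" "(u, v) \<in> E"
  shows "0 \<le> fwd_flow E p f t u v"
  using assms unfolding fwd_flow_def by (auto intro!: divide_nonneg_nonneg mult_nonneg_nonneg sum_nonneg)

lemma bwd_flow_nonneg:
  assumes "\<And>u' v'. (u', v') \<in> E \<Longrightarrow> 0 \<le> p t u' v'" "0 \<le> b t v" "(u, v) \<in> E"
  shows "0 \<le> bwd_flow E p b t u v"
  using assms unfolding bwd_flow_def by (auto intro!: divide_nonneg_nonneg mult_nonneg_nonneg sum_nonneg)

locale parallel_paths_dynamics =
  fixes V :: "'v set" and E :: "('v \<times> 'v) set" and s d :: 'v and P1 P2 :: "'v list"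
    and l :: "'v \<Rightarrow> real" and \<delta> :: real and p :: "nat \<Rightarrow> 'v \<Rightarrow> 'v \<Rightarrow> real"
    and f b :: "nat \<Rightarrow> 'v \<Rightarrow> real"
  assumes model: "pp_setup V E s d P1 P2 l \<delta> p f b"
    and source_input_nonneg: "\<And>t. 0 \<le> f t s" and target_input_nonneg: "\<And>t. 0 \<le> b t d"
begin

lemma paths: "two_parallel_paths V E s d P1 P2"
  using model unfolding pp_setup_def by simp

lemma paths': "two_parallel_paths V E s d P2 P1"
  using two_parallel_paths_swap[OF paths] .

lemma path_lengths: "length P1 < length P2" "2 \<le> length P1" "3 \<le> length P2"
  using model two_parallel_paths_basic(1)[OF paths] unfolding pp_setup_def path_len_def by auto

lemma decay_bounds: "0 < \<delta>" "\<delta> < 1"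
  using model unfolding pp_setup_def by auto

lemma forward_update: "v \<in> V \<Longrightarrow> v \<noteq> s \<Longrightarrow> f (Suc t) v = (\<Sum>z\<in>{z. (z, v) \<in> E}. fwd_flow E p f t z v)"
  using model unfolding pp_setup_def lin_dynamics_def by auto

lemma backward_update: "u \<in> V \<Longrightarrow> u \<noteq> d \<Longrightarrow> b (Suc t) u = (\<Sum>z\<in>{z. (u, z) \<in> E}. bwd_flow E p b t u z)"
  using model unfolding pp_setup_def lin_dynamics_def by auto

lemma pheromone_update:
  "(u, v) \<in> E \<Longrightarrow> p (Suc t) u v = \<delta> * (p t u v + fwd_flow E p f t u v + bwd_flow E p b t u v)"
  using model unfolding pp_setup_def lin_dynamics_def by auto

lemma edge_vertices: "(u, v) \<in> E \<Longrightarrow> u \<in> V \<and> v \<in> V"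
proof -
  have "u \<in> V \<and> v \<in> V" if tp: "two_parallel_paths V E s d P Q" and e: "(u, v) \<in> path_edges P" for P Q
  proof -
    obtain i where "Suc i < length P" "u = P ! i" "v = P ! Suc i" using e by (auto simp: mem_path_edges_iff)
    then show ?thesis using two_parallel_paths_nth(3)[OF tp] by simp
  qed
  then show "(u, v) \<in> E \<Longrightarrow> u \<in> V \<and> v \<in> V"
    using paths paths' two_parallel_paths_basic(7)[OF paths] by blast
qed

lemma state_nonneg: "(\<forall>u v. (u, v) \<in> E \<longrightarrow> 0 \<le> p t u v) \<and> (\<forall>v\<in>V. 0 \<le> f t v \<and> 0 \<le> b t v)"
proof (induction t)
  case 0
  then show ?case using model unfolding pp_setup_def by auto
next
  case (Suc t)
  have fwd: "0 \<le> fwd_flow E p f t u v" and bwd: "0 \<le> bwd_flow E p b t u v" if e: "(u, v) \<in> E" for u v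
    using Suc edge_vertices[OF e] e by (auto intro!: fwd_flow_nonneg bwd_flow_nonneg)
  have "0 \<le> p (Suc t) u v" if e: "(u, v) \<in> E" for u v
    using pheromone_update[OF e] fwd[OF e] bwd[OF e] Suc e decay_bounds by auto
  moreover have "0 \<le> f (Suc t) v" if "v \<in> V" for v
    using forward_update[OF that] source_input_nonneg fwd by (cases "v = s") (auto intro: sum_nonneg)
  moreover have "0 \<le> b (Suc t) v" if "v \<in> V" for v
    using backward_update[OF that] target_input_nonneg bwd by (cases "v = d") (auto intro: sum_nonneg)
  ultimately show ?case by blast
qed

lemma flows_nonneg: "(u, v) \<in> E \<Longrightarrow> 0 \<le> fwd_flow E p f t u v \<and> 0 \<le> bwd_flow E p b t u v"
  using state_nonneg[of t] edge_vertices[of u v] by (auto intro!: fwd_flow_nonneg bwd_flow_nonneg)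

lemma short_path_pheromone_pos: "(u, v) \<in> path_edges P1 \<Longrightarrow> 0 < p t u v"
proof (induction t)
  case 0
  then show ?case using model unfolding pp_setup_def by auto
next
  case (Suc t)
  have e: "(u, v) \<in> E" using Suc.prems two_parallel_paths_basic(7)[OF paths] by simp
  show ?case using pheromone_update[OF e] flows_nonneg[OF e] decay_bounds Suc
    by (simp add: add_pos_nonneg)
qed

text \<open>Internal vertices have a single in- and out-edge, so flows are transported unchanged along
  a path, one edge per time step.\<close>

lemma fwd_flow_shift:
  assumes tp: "two_parallel_paths V E s d P Q" and i: "0 < i" "i < length P - 1"
  shows "fwd_flow E p f (Suc t) (P ! i) (P ! Suc i) = fwd_flow E p f t (P ! (i - 1)) (P ! i)"
proof -
  have "P ! i \<in> V" "P ! i \<noteq> s" using two_parallel_paths_nth[OF tp, of i] i by auto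
  then show ?thesis
    using forward_update two_parallel_paths_successors_internal[OF tp i]
      two_parallel_paths_predecessors_internal[OF tp i] unfolding fwd_flow_def by simp
qed

lemma bwd_flow_shift:
  assumes tp: "two_parallel_paths V E s d P Q" and i: "0 < i" "i < length P - 1"
  shows "bwd_flow E p b (Suc t) (P ! (i - 1)) (P ! i) = bwd_flow E p b t (P ! i) (P ! Suc i)"
proof -
  have "P ! i \<in> V" "P ! i \<noteq> d" using two_parallel_paths_nth[OF tp, of i] i by auto
  then show ?thesis
    using backward_update two_parallel_paths_successors_internal[OF tp i]
      two_parallel_paths_predecessors_internal[OF tp i] unfolding bwd_flow_def by simp
qed

lemma fwd_flow_along_path:
  assumes tp: "two_parallel_paths V E s d P Q"
  shows "i < length P - 1 \<Longrightarrow> fwd_flow E p f (t + i) (P ! i) (P ! Suc i) = fwd_flow E p f t (P ! 0) (P ! 1)"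
proof (induction i)
  case (Suc i)
  then show ?case using fwd_flow_shift[OF tp, of "Suc i" "t + i"] by simp
qed simp

lemma bwd_flow_along_path:
  assumes tp: "two_parallel_paths V E s d P Q"
  shows "j < length P - 1 \<Longrightarrow> bwd_flow E p b (t + j) (P ! (length P - 2 - j)) (P ! (length P - 1 - j))
           = bwd_flow E p b t (P ! (length P - 2)) (P ! (length P - 1))"
proof (induction j)
  case (Suc j)
  define i where "i = length P - 2 - j"
  have i: "0 < i" "i < length P - 1" using Suc.prems unfolding i_def by auto
  have "length P - 2 - Suc j = i - 1" "length P - 1 - Suc j = i" "length P - 1 - j = Suc i"
    unfolding i_def using Suc.prems by auto
  then show ?case using bwd_flow_shift[OF tp i, of "t + j"] Suc unfolding i_def by simp
qed simp

definition "m = path_len P1"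
definition "n = path_len P2"
definition "F t = f t s"
definition "B t = b t d"
text \<open>\<open>Ps\<close>, \<open>Qs\<close> (\<open>Pd\<close>, \<open>Qd\<close>) are the pheromones on the first (last) edges of \<open>P1\<close> and \<open>P2\<close>,
  the only competing edges.\<close>

definition "Ps t = p t s (P1 ! 1)"
definition "Qs t = p t s (P2 ! 1)"
definition "Pd t = p t (P1 ! (length P1 - 2)) d"
definition "Qd t = p t (P2 ! (length P2 - 2)) d"
definition "share_s t = Qs t / (Ps t + Qs t)"
definition "share_d t = Qd t / (Pd t + Qd t)"
definition "share t = max (share_s t) (share_d t)"

lemma travel_time_bounds: "1 \<le> m" "m < n" "2 \<le> n"
  using path_lengths unfolding m_def n_def path_len_def by auto

lemma Ps_pos: "0 < Ps t"
  using short_path_pheromone_pos two_parallel_paths_edge[OF paths, of 0] path_lengths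
    two_parallel_paths_basic(3)[OF paths] unfolding Ps_def
  by (metis One_nat_def Suc_1 Suc_le_lessD mem_path_edges_iff)

lemma Pd_pos: "0 < Pd t"
proof -
  have "(P1 ! (length P1 - 2), P1 ! Suc (length P1 - 2)) \<in> path_edges P1"
    unfolding mem_path_edges_iff using path_lengths by (intro exI[of _ "length P1 - 2"]) simp
  then show ?thesis
    using short_path_pheromone_pos two_parallel_paths_basic(1,4)[OF paths] unfolding Pd_def
    by (simp add: numeral_2_eq_2 Suc_diff_Suc)
qed

lemma Qs_nonneg: "0 \<le> Qs t"
  using state_nonneg two_parallel_paths_first_edge[OF paths'] unfolding Qs_def by blast

lemma Qd_nonneg: "0 \<le> Qd t"
  using state_nonneg two_parallel_paths_last_edge[OF paths'] unfolding Qd_def by blast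

lemma share_range: "0 \<le> share_s t" "share_s t < 1" "0 \<le> share_d t" "share_d t < 1" "0 \<le> share t" "share t < 1"
  using Ps_pos[of t] Qs_nonneg[of t] Pd_pos[of t] Qd_nonneg[of t] unfolding share_s_def share_d_def share_def
  by (auto simp: max_def)

lemma inputs_nonneg: "0 \<le> F t" "0 \<le> B t"
  unfolding F_def B_def using source_input_nonneg target_input_nonneg by auto

lemma successors_source: "{z. (s, z) \<in> E} = {P1 ! 1, P2 ! 1}" "P1 ! 1 \<noteq> P2 ! 1"
  using two_parallel_paths_successors_source[OF paths]
    two_parallel_paths_second_vertices_distinct[OF paths path_lengths(3)] by auto

lemma predecessors_target: "{z. (z, d) \<in> E} = {P1 ! (length P1 - 2), P2 ! (length P2 - 2)}"
    "P1 ! (length P1 - 2) \<noteq> P2 ! (length P2 - 2)"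
  using two_parallel_paths_predecessors_target[OF paths]
    two_parallel_paths_penultimate_vertices_distinct[OF paths path_lengths(3)] by auto

lemma fwd_flow_source:
  "fwd_flow E p f t s (P1 ! 1) = F t * (1 - share_s t)" "fwd_flow E p f t s (P2 ! 1) = F t * share_s t"
proof -
  have "card {z. (s, z) \<in> E} = 2" "(\<Sum>z\<in>{z. (s, z) \<in> E}. p t s z) = Ps t + Qs t"
    using successors_source unfolding Ps_def Qs_def by simp_all
  moreover have "1 - share_s t = Ps t / (Ps t + Qs t)"
    using Ps_pos[of t] Qs_nonneg[of t] unfolding share_s_def by (simp add: field_simps)
  ultimately show "fwd_flow E p f t s (P1 ! 1) = F t * (1 - share_s t)" "fwd_flow E p f t s (P2 ! 1) = F t * share_s t"
    unfolding fwd_flow_def F_def Ps_def Qs_def share_s_def by simp_all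
qed

lemma bwd_flow_target:
  "bwd_flow E p b t (P1 ! (length P1 - 2)) d = B t * (1 - share_d t)"
  "bwd_flow E p b t (P2 ! (length P2 - 2)) d = B t * share_d t"
proof -
  have "card {z. (z, d) \<in> E} = 2" "(\<Sum>z\<in>{z. (z, d) \<in> E}. p t z d) = Pd t + Qd t"
    using predecessors_target unfolding Pd_def Qd_def by simp_all
  moreover have "1 - share_d t = Pd t / (Pd t + Qd t)"
    using Pd_pos[of t] Qd_nonneg[of t] unfolding share_d_def by (simp add: field_simps)
  ultimately show "bwd_flow E p b t (P1 ! (length P1 - 2)) d = B t * (1 - share_d t)"
    "bwd_flow E p b t (P2 ! (length P2 - 2)) d = B t * share_d t"
    unfolding bwd_flow_def B_def Pd_def Qd_def share_d_def by simp_all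
qed


lemma arrivals_at_source:
  "bwd_flow E p b (t + (m - 1)) s (P1 ! 1) = B t * (1 - share_d t)"
  "bwd_flow E p b (t + (n - 1)) s (P2 ! 1) = B t * share_d t"
proof -
  have arrive: "bwd_flow E p b (t + (length R - 2)) s (R ! 1) = bwd_flow E p b t (R ! (length R - 2)) d"
    if tp: "two_parallel_paths V E s d R R'" for R R'
  proof -
    have "2 \<le> length R" "R ! 0 = s" "R ! (length R - 1) = d" using two_parallel_paths_basic[OF tp] by auto
    moreover have "length R - 1 - (length R - 2) = 1" using calculation by simp
    ultimately show ?thesis using bwd_flow_along_path[OF tp, of "length R - 2" t] by simp
  qed
  show "bwd_flow E p b (t + (m - 1)) s (P1 ! 1) = B t * (1 - share_d t)"
    using arrive[OF paths] bwd_flow_target(1) unfolding m_def path_len_def by (simp add: numeral_2_eq_2)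
  show "bwd_flow E p b (t + (n - 1)) s (P2 ! 1) = B t * share_d t"
    using arrive[OF paths'] bwd_flow_target(2) unfolding n_def path_len_def by (simp add: numeral_2_eq_2)
qed

lemma arrivals_at_target:
  "fwd_flow E p f (t + (m - 1)) (P1 ! (length P1 - 2)) d = F t * (1 - share_s t)"
  "fwd_flow E p f (t + (n - 1)) (P2 ! (length P2 - 2)) d = F t * share_s t"
proof -
  have arrive: "fwd_flow E p f (t + (length R - 2)) (R ! (length R - 2)) d = fwd_flow E p f t s (R ! 1)"
    if tp: "two_parallel_paths V E s d R R'" for R R'
  proof -
    have "2 \<le> length R" "R ! 0 = s" "R ! (length R - 1) = d" using two_parallel_paths_basic[OF tp] by auto
    moreover have "Suc (length R - 2) = length R - 1" using calculation by simp
    ultimately show ?thesis using fwd_flow_along_path[OF tp, of "length R - 2" t] by simp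
  qed
  show "fwd_flow E p f (t + (m - 1)) (P1 ! (length P1 - 2)) d = F t * (1 - share_s t)"
    using arrive[OF paths] fwd_flow_source(1) unfolding m_def path_len_def by (simp add: numeral_2_eq_2)
  show "fwd_flow E p f (t + (n - 1)) (P2 ! (length P2 - 2)) d = F t * share_s t"
    using arrive[OF paths'] fwd_flow_source(2) unfolding n_def path_len_def by (simp add: numeral_2_eq_2)
qed

lemma source_recurrence:
  assumes t: "n - 1 \<le> t"
  shows "Ps (Suc t) = \<delta> * (Ps t + F t * (1 - share_s t) + B (Suc t - m) * (1 - share_d (Suc t - m)))"
    "Qs (Suc t) = \<delta> * (Qs t + F t * share_s t + B (Suc t - n) * share_d (Suc t - n))"
proof -
  have "t = (Suc t - m) + (m - 1)" "t = (Suc t - n) + (n - 1)" using t travel_time_bounds by auto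
  then have "bwd_flow E p b t s (P1 ! 1) = B (Suc t - m) * (1 - share_d (Suc t - m))"
    "bwd_flow E p b t s (P2 ! 1) = B (Suc t - n) * share_d (Suc t - n)"
    using arrivals_at_source[of "Suc t - m"] arrivals_at_source[of "Suc t - n"] by simp_all
  then show "Ps (Suc t) = \<delta> * (Ps t + F t * (1 - share_s t) + B (Suc t - m) * (1 - share_d (Suc t - m)))"
    "Qs (Suc t) = \<delta> * (Qs t + F t * share_s t + B (Suc t - n) * share_d (Suc t - n))"
    using pheromone_update[OF two_parallel_paths_first_edge[OF paths]]
      pheromone_update[OF two_parallel_paths_first_edge[OF paths']] fwd_flow_source
    unfolding Ps_def Qs_def by simp_all
qed

lemma target_recurrence:
  assumes t: "n - 1 \<le> t"
  shows "Pd (Suc t) = \<delta> * (Pd t + B t * (1 - share_d t) + F (Suc t - m) * (1 - share_s (Suc t - m)))"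
    "Qd (Suc t) = \<delta> * (Qd t + B t * share_d t + F (Suc t - n) * share_s (Suc t - n))"
proof -
  have "t = (Suc t - m) + (m - 1)" "t = (Suc t - n) + (n - 1)" using t travel_time_bounds by auto
  then have "fwd_flow E p f t (P1 ! (length P1 - 2)) d = F (Suc t - m) * (1 - share_s (Suc t - m))"
    "fwd_flow E p f t (P2 ! (length P2 - 2)) d = F (Suc t - n) * share_s (Suc t - n)"
    using arrivals_at_target[of "Suc t - m"] arrivals_at_target[of "Suc t - n"] by simp_all
  then show "Pd (Suc t) = \<delta> * (Pd t + B t * (1 - share_d t) + F (Suc t - m) * (1 - share_s (Suc t - m)))"
    "Qd (Suc t) = \<delta> * (Qd t + B t * share_d t + F (Suc t - n) * share_s (Suc t - n))"
    using pheromone_update[OF two_parallel_paths_last_edge[OF paths]]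
      pheromone_update[OF two_parallel_paths_last_edge[OF paths']] bwd_flow_target
    unfolding Pd_def Qd_def by (simp_all add: ac_simps)
qed

text \<open>Input entering at time \<open>t + 1 - m\<close> returns along the short path at time \<open>t\<close>, while the long
  path only returns the older input of time \<open>t + 1 - n\<close>; for growing inputs this gap \<open>L t\<close>
  favours the short path.\<close>

lemma window_contraction_of_input_gap:
  assumes F: "mono F" and B: "mono B"
    and U: "\<And>t. n - 1 \<le> t \<Longrightarrow> Ps t + Qs t + F t + B (Suc t - n) \<le> U t \<and> Pd t + Qd t + B t + F (Suc t - n) \<le> U t"
    and L: "\<And>t. n - 1 \<le> t \<Longrightarrow> 0 < L t \<and> L t \<le> B (Suc t - m) - B (Suc t - n) \<and> L t \<le> F (Suc t - m) - F (Suc t - n)"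
  shows "window_contraction n (\<lambda>t. L t / U t) share"
  unfolding window_contraction_def
proof (intro allI impI)
  fix t M assume tn: "n \<le> Suc t" and M: "0 \<le> M" "M < 1"
    and window: "\<forall>j. Suc t - n \<le> j \<and> j \<le> t \<longrightarrow> share j \<le> M"
  have t: "n - 1 \<le> t" using tn by simp
  have in_window: "share_s j \<le> M" "share_d j \<le> M" if "j \<in> {t, Suc t - m, Suc t - n}" for j
  proof -
    have "Suc t - n \<le> j \<and> j \<le> t" using that travel_time_bounds by auto
    then show "share_s j \<le> M" "share_d j \<le> M" using window unfolding share_def by auto
  qed
  have BF: "B (Suc t - n) \<le> B (Suc t - m)" "F (Suc t - n) \<le> F (Suc t - m)"
    using monoD[OF B] monoD[OF F] travel_time_bounds by auto
  have "share_s (Suc t) \<le> M / (1 + L t / U t * (1 - M))"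
    unfolding share_s_def
  proof (rule hub_share_update_le[OF decay_bounds(1) source_recurrence[OF t, unfolded share_s_def]])
    show "Qs t / (Ps t + Qs t) \<le> M" using in_window[of t] unfolding share_s_def by simp
    show "B (Suc t - m) * (1 - M) \<le> B (Suc t - m) * (1 - share_d (Suc t - m))"
      using in_window[of "Suc t - m"] inputs_nonneg by (intro mult_left_mono) auto
    show "B (Suc t - n) * share_d (Suc t - n) \<le> B (Suc t - n) * M"
      using in_window[of "Suc t - n"] inputs_nonneg by (intro mult_left_mono) auto
  qed (use Ps_pos Qs_nonneg inputs_nonneg share_range M BF U[OF t] L[OF t] in \<open>auto simp: share_s_def\<close>)
  moreover have "share_d (Suc t) \<le> M / (1 + L t / U t * (1 - M))"
    unfolding share_d_def
  proof (rule hub_share_update_le[OF decay_bounds(1) target_recurrence[OF t, unfolded share_d_def]])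
    show "Qd t / (Pd t + Qd t) \<le> M" using in_window[of t] unfolding share_d_def by simp
    show "F (Suc t - m) * (1 - M) \<le> F (Suc t - m) * (1 - share_s (Suc t - m))"
      using in_window[of "Suc t - m"] inputs_nonneg by (intro mult_left_mono) auto
    show "F (Suc t - n) * share_s (Suc t - n) \<le> F (Suc t - n) * M"
      using in_window[of "Suc t - n"] inputs_nonneg by (intro mult_left_mono) auto
  qed (use Pd_pos Qd_nonneg inputs_nonneg share_range M BF U[OF t] L[OF t] in \<open>auto simp: share_d_def\<close>)
  ultimately show "share (Suc t) \<le> M / (1 + L t / U t * (1 - M))" unfolding share_def by simp
qed

lemma hub_sums_recurrence:
  assumes F: "mono F" and B: "mono B" and t: "n - 1 \<le> t"
  shows "Ps (Suc t) + Qs (Suc t) \<le> \<delta> * (Ps t + Qs t + F t + 2 * B t)"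
    "Pd (Suc t) + Qd (Suc t) \<le> \<delta> * (Pd t + Qd t + B t + 2 * F t)"
proof -
  have returns: "X (Suc t - m) * (1 - w (Suc t - m)) \<le> X t" "X (Suc t - n) * w (Suc t - n) \<le> X t"
    if X: "mono X" "\<And>t. 0 \<le> X t" and w: "\<And>t. 0 \<le> w t \<and> w t < 1" for X w :: "nat \<Rightarrow> real"
  proof -
    have "X (Suc t - m) \<le> X t" "X (Suc t - n) \<le> X t" using monoD[OF X(1)] travel_time_bounds by auto
    moreover have "X (Suc t - m) * (1 - w (Suc t - m)) \<le> X (Suc t - m)" "X (Suc t - n) * w (Suc t - n) \<le> X (Suc t - n)"
      using X(2)[of "Suc t - m"] X(2)[of "Suc t - n"] w[of "Suc t - m"] w[of "Suc t - n"]
      by (simp_all add: mult_left_le)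
    ultimately show "X (Suc t - m) * (1 - w (Suc t - m)) \<le> X t" "X (Suc t - n) * w (Suc t - n) \<le> X t" by linarith+
  qed
  note B_returns = returns[OF B, of share_d] and F_returns = returns[OF F, of share_s]
  have "Ps (Suc t) + Qs (Suc t) = \<delta> * (Ps t + Qs t + F t + (B (Suc t - m) * (1 - share_d (Suc t - m)) + B (Suc t - n) * share_d (Suc t - n)))"
    using source_recurrence[OF t] by (simp add: algebra_simps)
  also have "\<dots> \<le> \<delta> * (Ps t + Qs t + F t + 2 * B t)"
    using B_returns inputs_nonneg share_range decay_bounds by (intro mult_left_mono) auto
  finally show "Ps (Suc t) + Qs (Suc t) \<le> \<delta> * (Ps t + Qs t + F t + 2 * B t)" .
  have "Pd (Suc t) + Qd (Suc t) = \<delta> * (Pd t + Qd t + B t + (F (Suc t - m) * (1 - share_s (Suc t - m)) + F (Suc t - n) * share_s (Suc t - n)))"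
    using target_recurrence[OF t] by (simp add: algebra_simps)
  also have "\<dots> \<le> \<delta> * (Pd t + Qd t + B t + 2 * F t)"
    using F_returns inputs_nonneg share_range decay_bounds by (intro mult_left_mono) auto
  finally show "Pd (Suc t) + Qd (Suc t) \<le> \<delta> * (Pd t + Qd t + B t + 2 * F t)" .
qed

lemma normalized_pheromones_ge:
  assumes "share t \<le> \<epsilon>" and e: "(u, v) \<in> path_edges P1"
  shows "1 - \<epsilon> \<le> nu_f E p t u v \<and> 1 - \<epsilon> \<le> nu_b E p t u v"
proof -
  obtain i where i: "Suc i < length P1" "u = P1 ! i" "v = P1 ! Suc i"
    using e by (auto simp: mem_path_edges_iff)
  have \<epsilon>: "0 \<le> \<epsilon>" "share_s t \<le> \<epsilon>" "share_d t \<le> \<epsilon>" using assms share_range[of t] unfolding share_def by auto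
  have puv: "0 < p t u v" using short_path_pheromone_pos[OF e] .
  have ends: "P1 ! 0 = s" "P1 ! (length P1 - 1) = d" using two_parallel_paths_basic(3,4)[OF paths] by auto
  have "1 - \<epsilon> \<le> nu_f E p t u v"
  proof (cases "i = 0")
    case True
    then have "nu_f E p t u v = Ps t / (Ps t + Qs t)"
      using i ends successors_source unfolding nu_f_def Ps_def Qs_def by simp
    also have "\<dots> = 1 - share_s t" using Ps_pos[of t] Qs_nonneg[of t] unfolding share_s_def by (simp add: field_simps)
    finally show ?thesis using \<epsilon> by simp
  next
    case False
    then have "{z. (u, z) \<in> E} = {v}" using two_parallel_paths_successors_internal[OF paths, of i] i by simp
    then show ?thesis using puv \<epsilon> unfolding nu_f_def by simp
  qed
  moreover have "1 - \<epsilon> \<le> nu_b E p t u v"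
  proof (cases "Suc i = length P1 - 1")
    case True
    then have "i = length P1 - 2" by linarith
    then have "u = P1 ! (length P1 - 2)" "v = d" using i ends True by simp_all
    then have "nu_b E p t u v = Pd t / (Pd t + Qd t)"
      using predecessors_target unfolding nu_b_def Pd_def Qd_def by simp
    also have "\<dots> = 1 - share_d t" using Pd_pos[of t] Qd_nonneg[of t] unfolding share_d_def by (simp add: field_simps)
    finally show ?thesis using \<epsilon> by simp
  next
    case False
    then have "{z. (z, v) \<in> E} = {u}" using two_parallel_paths_predecessors_internal[OF paths, of "Suc i"] i by simp
    then show ?thesis using puv \<epsilon> unfolding nu_b_def by simp
  qed
  ultimately show ?thesis ..
qed


section \<open>Exponentially and linearly growing inputs\<close>

lemma exponential_inputs_hub_sums_le:
  assumes lam: "1 < lam" and mono: "mono F" "mono B"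
    and F: "\<And>t. F t = lam ^ t * F0" and B: "\<And>t. B t = lam ^ t * B0" and F0: "0 \<le> F0" and B0: "0 \<le> B0"
  shows "\<exists>K\<ge>0. \<forall>t\<ge>n - 1. Ps t + Qs t \<le> K * lam ^ t \<and> Pd t + Qd t \<le> K * lam ^ t"
proof -
  have "Ps (Suc t) + Qs (Suc t) \<le> \<delta> * (Ps t + Qs t + (F0 + 2 * B0) * lam ^ t)"
    "Pd (Suc t) + Qd (Suc t) \<le> \<delta> * (Pd t + Qd t + (B0 + 2 * F0) * lam ^ t)" if "n - 1 \<le> t" for t
    using hub_sums_recurrence[OF mono that] unfolding F B by (simp_all add: algebra_simps)
  moreover have "0 \<le> F0 + 2 * B0" "0 \<le> B0 + 2 * F0" using F0 B0 by simp_all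
  ultimately obtain Ks Kd where Ks: "\<And>t. n - 1 \<le> t \<Longrightarrow> Ps t + Qs t \<le> Ks * lam ^ t"
    and Kd: "\<And>t. n - 1 \<le> t \<Longrightarrow> Pd t + Qd t \<le> Kd * lam ^ t"
    using geometric_recurrence_bound[OF decay_bounds lam, of "F0 + 2 * B0" "n - 1" "\<lambda>t. Ps t + Qs t"]
      geometric_recurrence_bound[OF decay_bounds lam, of "B0 + 2 * F0" "n - 1" "\<lambda>t. Pd t + Qd t"]
    by blast
  have "Ks * lam ^ t \<le> (\<bar>Ks\<bar> + \<bar>Kd\<bar>) * lam ^ t" "Kd * lam ^ t \<le> (\<bar>Ks\<bar> + \<bar>Kd\<bar>) * lam ^ t" for t
    using lam by (intro mult_right_mono; simp)+
  then have "\<forall>t\<ge>n - 1. Ps t + Qs t \<le> (\<bar>Ks\<bar> + \<bar>Kd\<bar>) * lam ^ t \<and> Pd t + Qd t \<le> (\<bar>Ks\<bar> + \<bar>Kd\<bar>) * lam ^ t"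
    using Ks Kd by (meson order_trans)
  moreover have "0 \<le> \<bar>Ks\<bar> + \<bar>Kd\<bar>" by simp
  ultimately show ?thesis by blast
qed

lemma exponential_inputs_window_contraction:
  assumes lam: "1 < lam" and F: "\<And>t. F t = lam ^ t * F0" and B: "\<And>t. B t = lam ^ t * B0"
    and F0: "0 < F0" and B0: "0 < B0"
  shows "\<exists>h0>0. window_contraction n (\<lambda>_. h0) share"
proof -
  have mono: "mono F" "mono B"
    unfolding mono_def F B using F0 B0 lam by (auto intro!: mult_right_mono power_increasing)
  obtain K where K: "0 \<le> K" "\<And>t. n - 1 \<le> t \<Longrightarrow> Ps t + Qs t \<le> K * lam ^ t \<and> Pd t + Qd t \<le> K * lam ^ t"
    using exponential_inputs_hub_sums_le[OF lam mono F B less_imp_le[OF F0] less_imp_le[OF B0]] by blast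
  define U where "U = K + F0 + B0"
  define L where "L = min F0 B0 * (lam - 1) / lam ^ (n - 1)"
  have "window_contraction n (\<lambda>t. L * lam ^ t / (U * lam ^ t)) share"
  proof (rule window_contraction_of_input_gap[OF mono])
    fix t assume t: "n - 1 \<le> t"
    have "Suc t - n \<le> t" using travel_time_bounds by simp
    then have "B (Suc t - n) \<le> B t" "F (Suc t - n) \<le> F t" using mono by (simp_all add: monoD)
    moreover have "U * lam ^ t = K * lam ^ t + F t + B t" unfolding U_def F B by (simp add: algebra_simps)
    ultimately show "Ps t + Qs t + F t + B (Suc t - n) \<le> U * lam ^ t \<and> Pd t + Qd t + B t + F (Suc t - n) \<le> U * lam ^ t"
      using K(2)[OF t] by linarith
    have "L * lam ^ t = min F0 B0 * ((lam - 1) / lam ^ (n - 1) * lam ^ t)" unfolding L_def by simp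
    also have "\<dots> \<le> c * (lam ^ (Suc t - m) - lam ^ (Suc t - n))" if "min F0 B0 \<le> c" for c
      using that geometric_gap[OF lam travel_time_bounds(1,2) t] F0 B0 lam by (intro mult_mono) auto
    finally have "L * lam ^ t \<le> B (Suc t - m) - B (Suc t - n)" "L * lam ^ t \<le> F (Suc t - m) - F (Suc t - n)"
      unfolding F B by (auto simp: algebra_simps)
    moreover have "0 < L * lam ^ t" unfolding L_def using F0 B0 lam by simp
    ultimately show "0 < L * lam ^ t \<and> L * lam ^ t \<le> B (Suc t - m) - B (Suc t - n)
        \<and> L * lam ^ t \<le> F (Suc t - m) - F (Suc t - n)" by blast
  qed
  moreover have "(\<lambda>t. L * lam ^ t / (U * lam ^ t)) = (\<lambda>_. L / U)" using lam by (simp add: fun_eq_iff)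
  moreover have "0 < L / U" unfolding L_def U_def using K(1) F0 B0 lam by simp
  ultimately show ?thesis by auto
qed

lemma exponential_inputs_convergence:
  assumes lam: "1 < lam" and F: "\<And>t. F t = lam ^ t * F0" and B: "\<And>t. B t = lam ^ t * B0"
    and F0: "0 < F0" and B0: "0 < B0"
  shows "\<exists>C1>0. \<exists>C2>0. \<forall>\<epsilon>. 0 < \<epsilon> \<and> \<epsilon> < 1 \<longrightarrow> (\<forall>t. C1 + C2 * ln (1 / \<epsilon>) \<le> real t \<longrightarrow>
           (\<forall>(u, v)\<in>path_edges P1. 1 - \<epsilon> \<le> nu_f E p t u v \<and> 1 - \<epsilon> \<le> nu_b E p t u v))"
proof -
  obtain h0 where "0 < h0" "window_contraction n (\<lambda>_. h0) share"
    using exponential_inputs_window_contraction[OF assms] by blast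
  then obtain r where "0 < r" "r < 1" "\<And>t. share t \<le> r ^ (t - n)"
    using window_contraction_geometric_decay[of n "\<lambda>_. h0" share h0] travel_time_bounds share_range by auto
  from geometric_decay_threshold[OF this] show ?thesis
    using normalized_pheromones_ge by blast
qed


lemma linear_inputs_hub_sums_le:
  assumes \<alpha>: "0 < \<alpha>" and mono: "mono F" "mono B"
    and F: "\<And>t. F t = F0 + \<alpha> * real t" and B: "\<And>t. B t = B0 + \<alpha> * real t" and F0: "0 \<le> F0" and B0: "0 \<le> B0"
  shows "\<exists>K\<ge>0. \<forall>t\<ge>n - 1. Ps t + Qs t \<le> 3 * \<alpha> * \<delta> / (1 - \<delta>) * real t + K
    \<and> Pd t + Qd t \<le> 3 * \<alpha> * \<delta> / (1 - \<delta>) * real t + K"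
proof -
  note \<delta> = decay_bounds
  have "Ps (Suc t) + Qs (Suc t) \<le> \<delta> * (Ps t + Qs t + 3 * \<alpha> * real t + (F0 + 2 * B0))"
    "Pd (Suc t) + Qd (Suc t) \<le> \<delta> * (Pd t + Qd t + 3 * \<alpha> * real t + (B0 + 2 * F0))" if "n - 1 \<le> t" for t
    using hub_sums_recurrence[OF mono that] unfolding F B by (simp_all add: algebra_simps)
  moreover have "0 \<le> 3 * \<alpha>" "0 \<le> F0 + 2 * B0" "0 \<le> B0 + 2 * F0" using \<alpha> F0 B0 by simp_all
  ultimately obtain Ks Kd where
    Ks: "\<And>t. n - 1 \<le> t \<Longrightarrow> Ps t + Qs t \<le> 3 * \<alpha> * \<delta> / (1 - \<delta>) * real t + Ks" and
    Kd: "\<And>t. n - 1 \<le> t \<Longrightarrow> Pd t + Qd t \<le> 3 * \<alpha> * \<delta> / (1 - \<delta>) * real t + Kd"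
    using affine_recurrence_bound[OF \<delta>, of "3 * \<alpha>" "F0 + 2 * B0" "n - 1" "\<lambda>t. Ps t + Qs t"]
      affine_recurrence_bound[OF \<delta>, of "3 * \<alpha>" "B0 + 2 * F0" "n - 1" "\<lambda>t. Pd t + Qd t"] by blast
  have "Ks \<le> \<bar>Ks\<bar> + \<bar>Kd\<bar>" "Kd \<le> \<bar>Ks\<bar> + \<bar>Kd\<bar>" by simp_all
  then have "\<forall>t\<ge>n - 1. Ps t + Qs t \<le> 3 * \<alpha> * \<delta> / (1 - \<delta>) * real t + (\<bar>Ks\<bar> + \<bar>Kd\<bar>)
    \<and> Pd t + Qd t \<le> 3 * \<alpha> * \<delta> / (1 - \<delta>) * real t + (\<bar>Ks\<bar> + \<bar>Kd\<bar>)"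
    using Ks Kd by (meson add_left_mono order_trans)
  moreover have "0 \<le> \<bar>Ks\<bar> + \<bar>Kd\<bar>" by simp
  ultimately show ?thesis by blast
qed

lemma linear_inputs_window_contraction:
  assumes \<alpha>: "0 < \<alpha>" and F: "\<And>t. F t = F0 + \<alpha> * real t" and B: "\<And>t. B t = B0 + \<alpha> * real t"
    and F0: "0 < F0" and B0: "0 < B0"
  shows "\<exists>H \<ge> 2 * real n. window_contraction n (\<lambda>t. (1 - \<delta>) / 3 / (real t + H)) share"
proof -
  have mono: "mono F" "mono B" unfolding mono_def F B using \<alpha> by auto
  note \<delta> = decay_bounds
  obtain K where K: "0 \<le> K" "\<And>t. n - 1 \<le> t \<Longrightarrow> Ps t + Qs t \<le> 3 * \<alpha> * \<delta> / (1 - \<delta>) * real t + K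
      \<and> Pd t + Qd t \<le> 3 * \<alpha> * \<delta> / (1 - \<delta>) * real t + K"
    using linear_inputs_hub_sums_le[OF \<alpha> mono F B less_imp_le[OF F0] less_imp_le[OF B0]] by blast
  define c where "c = 3 * \<alpha> / (1 - \<delta>)"
  define H where "H = 2 * real n + (K + F0 + B0) / c"
  have c: "3 * \<alpha> * \<delta> / (1 - \<delta>) = c - 3 * \<alpha>" "0 < c"
    using \<delta> \<alpha> unfolding c_def by (auto simp: field_simps)
  have "c * H = 2 * real n * c + (K + F0 + B0)" unfolding H_def using c(2) by (simp add: field_simps)
  then have H: "2 * real n \<le> H" "K + F0 + B0 \<le> c * H"
    unfolding H_def using c(2) K(1) F0 B0 by (simp_all add: zero_le_mult_iff)
  have "window_contraction n (\<lambda>t. \<alpha> / (c * (real t + H))) share"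
  proof (rule window_contraction_of_input_gap[OF mono])
    fix t assume t: "n - 1 \<le> t"
    have "Suc t - n \<le> t" using travel_time_bounds by simp
    then have "B (Suc t - n) \<le> B t" "F (Suc t - n) \<le> F t" using mono by (simp_all add: monoD)
    moreover have "0 \<le> \<alpha> * real t" using \<alpha> by simp
    moreover have "c * (real t + H) = c * real t + c * H" by (simp add: algebra_simps)
    ultimately show "Ps t + Qs t + F t + B (Suc t - n) \<le> c * (real t + H) \<and> Pd t + Qd t + B t + F (Suc t - n) \<le> c * (real t + H)"
      using K(2)[OF t] H(2) unfolding F B c(1) left_diff_distrib by linarith
    have "1 \<le> real (Suc t - m) - real (Suc t - n)" using t travel_time_bounds by (simp add: of_nat_diff)
    from mult_left_mono[OF this, of \<alpha>] have "\<alpha> \<le> \<alpha> * (real (Suc t - m) - real (Suc t - n))"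
      using \<alpha> by simp
    moreover have "B (Suc t - m) - B (Suc t - n) = \<alpha> * (real (Suc t - m) - real (Suc t - n))"
      "F (Suc t - m) - F (Suc t - n) = \<alpha> * (real (Suc t - m) - real (Suc t - n))"
      unfolding F B by (simp_all add: algebra_simps)
    ultimately show "0 < \<alpha> \<and> \<alpha> \<le> B (Suc t - m) - B (Suc t - n) \<and> \<alpha> \<le> F (Suc t - m) - F (Suc t - n)"
      using \<alpha> by simp
  qed
  moreover have "(\<lambda>t. \<alpha> / (c * (real t + H))) = (\<lambda>t. (1 - \<delta>) / 3 / (real t + H))"
  proof (rule ext)
    fix t
    have "\<alpha> / (c * (real t + H)) = (\<alpha> * (1 - \<delta>)) / (\<alpha> * (3 * (real t + H)))"
      unfolding c_def by (simp add: ac_simps)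
    also have "\<dots> = (1 - \<delta>) / 3 / (real t + H)" using \<alpha> by simp
    finally show "\<alpha> / (c * (real t + H)) = (1 - \<delta>) / 3 / (real t + H)" .
  qed
  ultimately show ?thesis using H(1) by auto
qed

lemma linear_inputs_convergence:
  assumes \<alpha>: "0 < \<alpha>" and F: "\<And>t. F t = F0 + \<alpha> * real t" and B: "\<And>t. B t = B0 + \<alpha> * real t"
    and F0: "0 < F0" and B0: "0 < B0"
  shows "\<exists>C>0. \<forall>\<epsilon>. 0 < \<epsilon> \<and> \<epsilon> < 1 \<longrightarrow> (\<forall>t. C * (1 / \<epsilon>) powr (12 * real n / (1 - \<delta>)) \<le> real t \<longrightarrow>
           (\<forall>(u, v)\<in>path_edges P1. 1 - \<epsilon> \<le> nu_f E p t u v \<and> 1 - \<epsilon> \<le> nu_b E p t u v))"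
proof -
  define \<kappa> where "\<kappa> = (1 - \<delta>) / 3"
  obtain H where H: "2 * real n \<le> H" "window_contraction n (\<lambda>t. \<kappa> / (real t + H)) share"
    using linear_inputs_window_contraction[OF assms] unfolding \<kappa>_def by blast
  have \<kappa>: "0 < \<kappa>" "\<kappa> \<le> 1" using decay_bounds unfolding \<kappa>_def by auto
  have "\<exists>a>0. \<exists>T. \<forall>t\<ge>T. share t \<le> (a / (t + H)) powr (\<kappa> / (4 * real n))"
    by (rule window_contraction_uniform_power_decay[OF H(2) _ \<kappa> H(1)]) (use travel_time_bounds share_range in auto)
  then obtain a T where "0 < a" "\<And>t. T \<le> t \<Longrightarrow> share t \<le> (a / (t + H)) powr (\<kappa> / (4 * real n))"
    by blast
  moreover have "0 < \<kappa> / (4 * real n)" "1 / (\<kappa> / (4 * real n)) = 12 * real n / (1 - \<delta>)"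
    using \<kappa> travel_time_bounds unfolding \<kappa>_def by auto
  ultimately have "\<exists>C>0. \<forall>\<epsilon>. 0 < \<epsilon> \<and> \<epsilon> < 1 \<longrightarrow> (\<forall>t. C * (1 / \<epsilon>) powr (12 * real n / (1 - \<delta>)) \<le> real t \<longrightarrow> share t \<le> \<epsilon>)"
    using power_decay_threshold[of a "\<kappa> / (4 * real n)" H T share] H(1) by auto
  then show ?thesis using normalized_pheromones_ge by blast
qed

end

text \<open>The guard only makes the exponent positive outside the range \<open>0 < \<delta> < 1\<close>, \<open>0 < k\<close>.\<close>

definition linear_rate_exponent :: "real \<Rightarrow> nat \<Rightarrow> real" where
  "linear_rate_exponent \<delta> k = (if 0 < \<delta> \<and> \<delta> < 1 \<and> 0 < k then 12 * real k / (1 - \<delta>) else 1)"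

lemma linear_rate_exponent_pos: "0 < linear_rate_exponent \<delta> k"
  unfolding linear_rate_exponent_def by auto

lemma exponential_inputs_normalized_pheromones:
  assumes model: "pp_setup V E s d P1 P2 l \<delta> p f b" and lam: "1 < lam"
    and inputs: "\<forall>t. f t s = lam ^ t * f 0 s \<and> b t d = lam ^ t * b 0 d"
  shows "\<exists>C1>0. \<exists>C2>0. \<forall>\<epsilon>. 0 < \<epsilon> \<and> \<epsilon> < 1 \<longrightarrow> (\<forall>t. C1 + C2 * ln (1 / \<epsilon>) \<le> real t \<longrightarrow>
           (\<forall>(u, v)\<in>path_edges P1. 1 - \<epsilon> \<le> nu_f E p t u v \<and> 1 - \<epsilon> \<le> nu_b E p t u v))"
proof -
  have pos: "0 < f 0 s" "0 < b 0 d" using model unfolding pp_setup_def by auto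
  have F: "f t s = lam ^ t * f 0 s" and B: "b t d = lam ^ t * b 0 d" for t using inputs by blast+
  have "0 \<le> f t s" "0 \<le> b t d" for t unfolding F[of t] B[of t] using pos lam by simp_all
  then interpret parallel_paths_dynamics V E s d P1 P2 l \<delta> p f b
    using model by unfold_locales
  show ?thesis
    using exponential_inputs_convergence[OF lam _ _ pos] F B unfolding F_def B_def by blast
qed

lemma linear_inputs_normalized_pheromones:
  assumes model: "pp_setup V E s d P1 P2 l \<delta> p f b" and \<alpha>: "0 < \<alpha>"
    and inputs: "\<forall>t. f t s = f 0 s + \<alpha> * real t \<and> b t d = b 0 d + \<alpha> * real t"
  shows "\<exists>C>0. \<forall>\<epsilon>. 0 < \<epsilon> \<and> \<epsilon> < 1 \<longrightarrow>
           (\<forall>t. C * (1 / \<epsilon>) powr linear_rate_exponent \<delta> (path_len P2) \<le> real t \<longrightarrow>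
             (\<forall>(u, v)\<in>path_edges P1. 1 - \<epsilon> \<le> nu_f E p t u v \<and> 1 - \<epsilon> \<le> nu_b E p t u v))"
proof -
  have pos: "0 < f 0 s" "0 < b 0 d" using model unfolding pp_setup_def by auto
  have F: "f t s = f 0 s + \<alpha> * real t" and B: "b t d = b 0 d + \<alpha> * real t" for t
    using inputs by blast+
  have "0 \<le> f t s" "0 \<le> b t d" for t unfolding F[of t] B[of t] using pos \<alpha> by simp_all
  then interpret parallel_paths_dynamics V E s d P1 P2 l \<delta> p f b
    using model by unfold_locales
  have "linear_rate_exponent \<delta> (path_len P2) = 12 * real n / (1 - \<delta>)"
    using decay_bounds travel_time_bounds unfolding linear_rate_exponent_def n_def by auto
  moreover have "\<exists>C>0. \<forall>\<epsilon>. 0 < \<epsilon> \<and> \<epsilon> < 1 \<longrightarrow>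
           (\<forall>t. C * (1 / \<epsilon>) powr (12 * real n / (1 - \<delta>)) \<le> real t \<longrightarrow>
             (\<forall>(u, v)\<in>path_edges P1. 1 - \<epsilon> \<le> nu_f E p t u v \<and> 1 - \<epsilon> \<le> nu_b E p t u v))"
    using linear_inputs_convergence[OF \<alpha> _ _ pos] F B unfolding F_def B_def by blast
  ultimately show ?thesis by simp
qed

theorem theorem2:
  shows
  "(\<forall>(V :: nat set) E s d P1 P2 l \<delta> p f b (lam::real).
      pp_setup V E s d P1 P2 l \<delta> p f b \<and> lam > 1 \<and>
      (\<forall>t. f t s = lam ^ t * f 0 s \<and> b t d = lam ^ t * b 0 d) \<longrightarrow>
      (\<exists>C1 > 0. \<exists>C2 > 0. \<forall>\<epsilon>::real. 0 < \<epsilon> \<and> \<epsilon> < 1 \<longrightarrow>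
         (\<forall>t::nat. real t \<ge> C1 + C2 * ln (1 / \<epsilon>) \<longrightarrow>
            (\<forall>(u, v)\<in>path_edges P1.
               nu_f E p t u v \<ge> 1 - \<epsilon> \<and> nu_b E p t u v \<ge> 1 - \<epsilon>)))) \<and>
   (\<exists>K :: real \<Rightarrow> nat \<Rightarrow> real. (\<forall>\<delta> n. K \<delta> n > 0) \<and>
     (\<forall>(V :: nat set) E s d P1 P2 l \<delta> p f b (\<alpha>::real).
      pp_setup V E s d P1 P2 l \<delta> p f b \<and> \<alpha> > 0 \<and>
      (\<forall>t. f t s = f 0 s + \<alpha> * real t \<and> b t d = b 0 d + \<alpha> * real t) \<longrightarrow>
      (\<exists>C > 0. \<forall>\<epsilon>::real. 0 < \<epsilon> \<and> \<epsilon> < 1 \<longrightarrow>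
         (\<forall>t::nat. real t \<ge> C * (1 / \<epsilon>) powr K \<delta> (path_len P2) \<longrightarrow>
            (\<forall>(u, v)\<in>path_edges P1.
               nu_f E p t u v \<ge> 1 - \<epsilon> \<and> nu_b E p t u v \<ge> 1 - \<epsilon>)))))"
proof (intro conjI exI[of _ linear_rate_exponent] allI impI; (elim conjE)?)
  show "0 < linear_rate_exponent \<delta> n" for \<delta> n
    by (rule linear_rate_exponent_pos)
qed (rule exponential_inputs_normalized_pheromones linear_inputs_normalized_pheromones; assumption)+

end
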